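(* Consider minimizing $f:\mathbb{R}^n\to\mathbb{R}$ by a generalized pattern search algorithm, at iteration $k$ with current iterate $x_k$ and mesh $M_k$. Let $X=\{x_j\}_{j=0}^{N-1}\subseteq M_k$ be a set of $N$ mesh points, $t$ of which are improved mesh points (i.e. $f(x_j)<f(x_k)$). Run the Quantum Search Step (described in the context) on $X$ with tolerance $\tau>0$. Then exactly one of the following holds: (i) the quantum search step returns an improved mesh point using $\Theta\left(\sqrt{N/t}\right)$ calls to the quantum oracle $F$; (ii) the quantum search step terminates without finding the next iterate. Moreover, if $X$ contains an improved mesh point, the probability of the quantum search step terminating without finding the next iterate can be made arbitrarily low (by the choice of $\tau$).
   Context: Generalized pattern search: the mesh at iteration $k$ is $M_k=\{x_k+\Delta_k Dz: z\in\mathbb{N}^p\}$, where $\Delta_k>0$ and $D$ is an $n\times p$ real matrix whose columns positively span $\mathbb{R}^n$ and are of the form $Gz_i$ for a nonsingular $G\in\mathbb{R}^{n\times n}$ and $z_i\in\mathbb{Z}^n$. A point $y\in M_k$ is an improved mesh point if $f(y)<f(x_k)$. Points and function values are encoded as fixed-point two's complement bit strings in qubit registers (each coordinate with $d$ bits), and one assumes a quantum oracle $F$ with $F\ket{x}\ket{0}=\ket{x}\ket{f(x)}$, acting linearly on superpositions. Write $f_j=f(x_j)$, $f_k=f(x_k)$. The algorithm $\mathcal{A}$ acts on three registers: it places the third register in $\ket{-f_k}$, puts the first register into the uniform superposition $\frac{1}{\sqrt N}\sum_j\ket{x_j}$, applies $F$ to the first two registers, and adds the second register into the third (in-place signed quantum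 addition), giving $\mathcal{A}\ket{0}\ket{0}\ket{0}=\frac{1}{\sqrt N}\sum_{j=0}^{N-1}\ket{x_j}\ket{f_j}\ket{f_j-f_k}$. Desired states are those basis states with $f_j-f_k<0$ (sign bit of the third register equal to $1$). $S_0$ negates the all-zeros basis state and fixes all others; $S_\chi$ negates desired basis states and fixes all others; $Q=-\mathcal{A}S_0\mathcal{A}^{-1}S_\chi$. Modified QSearch with tolerance $\tau>0$: set $l=0$, $u=0$, fix $1<c<2$. Prepare $\mathcal{A}\ket{0}$ and measure; if desired, return it. While no desired state has been returned and $u<\ln(\tau)/\ln(3/4)$: increase $l$ by 1, set $M=\lceil c^l\rceil$; if $M>\sqrt N$ increase $u$ by 1; prepare $\mathcal{A}\ket{0}$, choose $j$ uniformly from the integers in $[1,M]$, apply $Q$ $j$ times, measure, and return the state if it is desired. If the loop ends without a desired state, report failure. Quantum Search Step: apply modified QSearch to three registers initialized to $\ket{0}\ket{0}\ket{0}$; if it returns an improved mesh point $x'$, set $x_{k+1}=x'$ (and update the mesh size parameter); otherwise terminate and report failure to find an improved mesh point. *)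

theory Defs
  imports "HOL-Probability.Probability"
begin

definition col :: "real^'p^'n \<Rightarrow> 'p \<Rightarrow> real^'n" where
  "col D j = (\<chi> i. D $ i $ j)"

definition positively_spanning :: "real^'p^'n \<Rightarrow> bool" where
  "positively_spanning D \<longleftrightarrow>
     (\<forall>v. \<exists>lam::'p \<Rightarrow> real. (\<forall>j. 0 \<le> lam j) \<and> v = (\<Sum>j\<in>UNIV. lam j *\<^sub>R col D j))"

definition gps_directions :: "real^'p^'n \<Rightarrow> real^'n^'n \<Rightarrow> ('p \<Rightarrow> int^'n) \<Rightarrow> bool" where
  "gps_directions D G zs \<longleftrightarrow> positively_spanning D \<and> invertible G \<and>
     (\<forall>j. col D j = G *v (\<chi> i. real_of_int (zs j $ i)))"

definition gps_mesh :: "real^'n \<Rightarrow> real \<Rightarrow> real^'p^'n \<Rightarrow> (real^'n) set" where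
  "gps_mesh xk \<Delta> D = {xk + \<Delta> *\<^sub>R (D *v z) | z. \<forall>j. z $ j \<in> \<nat>}"

text \<open>A d-bit two's complement register is identified with the integer it denotes,
  a value in [-2^(d-1), 2^(d-1)); its sign bit is 1 iff that integer is negative.
  Fixed-point with q fractional bits: the code c denotes the real c / 2^q.\<close>
definition tc_range :: "nat \<Rightarrow> int set" where
  "tc_range d = {-(2^(d-1)) ..< 2^(d-1)}"

definition sign_bit :: "int \<Rightarrow> bool" where
  "sign_bit v \<longleftrightarrow> v < 0"

definition representable :: "nat \<Rightarrow> nat \<Rightarrow> real \<Rightarrow> bool" where
  "representable d q r \<longleftrightarrow> (\<exists>c\<in>tc_range d. r = real_of_int c / 2^q)"

definition fx_code :: "nat \<Rightarrow> real \<Rightarrow> int" where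
  "fx_code q r = \<lfloor>r * 2^q\<rfloor>"

definition fx_decode_vec :: "nat \<Rightarrow> int^'n \<Rightarrow> real^'n" where
  "fx_decode_vec q p = (\<chi> i. real_of_int (p $ i) / 2^q)"

text \<open>Computational basis states of the three registers: (point register, value register,
  value register).\<close>
type_synonym 'n qbasis = "(int^'n) \<times> int \<times> int"

definition qbasis_set :: "nat \<Rightarrow> ('n::finite) qbasis set" where
  "qbasis_set d = {(p,a,b). (\<forall>i. p $ i \<in> tc_range d) \<and> a \<in> tc_range d \<and> b \<in> tc_range d}"

type_synonym 'n qstate = "'n qbasis \<Rightarrow> complex"

definition supported_in :: "'b set \<Rightarrow> ('b \<Rightarrow> complex) \<Rightarrow> bool" where
  "supported_in B v \<longleftrightarrow> (\<forall>b. b \<notin> B \<longrightarrow> v b = 0)"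

definition ket :: "'b \<Rightarrow> 'b \<Rightarrow> complex" where
  "ket b = (\<lambda>b'. if b' = b then 1 else 0)"

definition ket0 :: "('n::finite) qstate" where
  "ket0 = ket (0, 0, 0)"

definition unitary_on :: "'b set \<Rightarrow> (('b \<Rightarrow> complex) \<Rightarrow> ('b \<Rightarrow> complex))
    \<Rightarrow> (('b \<Rightarrow> complex) \<Rightarrow> ('b \<Rightarrow> complex)) \<Rightarrow> bool" where
  "unitary_on B A Ainv \<longleftrightarrow>
    (\<forall>v. supported_in B v \<longrightarrow>
        supported_in B (A v) \<and> supported_in B (Ainv v) \<and> Ainv (A v) = v \<and> A (Ainv v) = v \<and>
        (\<Sum>b\<in>B. (cmod (A v b))^2) = (\<Sum>b\<in>B. (cmod (v b))^2)) \<and>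
    (\<forall>v w a. supported_in B v \<longrightarrow> supported_in B w \<longrightarrow>
        A (\<lambda>b. a * v b + w b) = (\<lambda>b. a * A v b + A w b))"

text \<open>Basis state |x_j>|f_j>|f_j - f_k>: third register = |-f_k> plus (in place) |f_j>.\<close>
definition enc_basis :: "nat \<Rightarrow> (real^'n \<Rightarrow> real) \<Rightarrow> real^'n \<Rightarrow> real^'n \<Rightarrow> ('n::finite) qbasis" where
  "enc_basis q f xk x =
     ((\<chi> i. fx_code q (x $ i)), fx_code q (f x), fx_code q (- f xk) + fx_code q (f x))"

definition qss_state :: "nat \<Rightarrow> (real^'n \<Rightarrow> real) \<Rightarrow> real^'n \<Rightarrow> (nat \<Rightarrow> real^'n) \<Rightarrow> nat \<Rightarrow> ('n::finite) qstate" where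
  "qss_state q f xk xs N = (\<lambda>b. \<Sum>j<N. complex_of_real (1 / sqrt (real N)) * ket (enc_basis q f xk (xs j)) b)"

definition desired :: "('n::finite) qbasis \<Rightarrow> bool" where
  "desired b \<longleftrightarrow> sign_bit (snd (snd b))"

definition S0 :: "('n::finite) qstate \<Rightarrow> ('n::finite) qstate" where
  "S0 v = (\<lambda>b. if b = (0,0,0) then - v b else v b)"

definition Schi :: "('n::finite) qstate \<Rightarrow> ('n::finite) qstate" where
  "Schi v = (\<lambda>b. if desired b then - v b else v b)"

definition Qop :: "(('n::finite) qstate \<Rightarrow> ('n::finite) qstate) \<Rightarrow> (('n::finite) qstate \<Rightarrow> ('n::finite) qstate) \<Rightarrow> ('n::finite) qstate \<Rightarrow> ('n::finite) qstate" where
  "Qop A Ainv v = (\<lambda>b. - (A (S0 (Ainv (Schi v)))) b)"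

definition measure_basis :: "('b \<Rightarrow> complex) \<Rightarrow> 'b pmf" where
  "measure_basis v = embed_pmf (\<lambda>b. (cmod (v b))^2)"

text \<open>Returns the measured basis state and the number of oracle calls (A and A^-1 each call F once:
  1 for the preparation and 2 per application of Q).\<close>
definition qsearch_round :: "(('n::finite) qstate \<Rightarrow> ('n::finite) qstate) \<Rightarrow> (('n::finite) qstate \<Rightarrow> ('n::finite) qstate) \<Rightarrow> ('n::finite) qstate
    \<Rightarrow> nat \<Rightarrow> (('n::finite) qbasis \<times> nat) pmf" where
  "qsearch_round A Ainv \<psi> M =
     do { j \<leftarrow> pmf_of_set {1..M};
          b \<leftarrow> measure_basis ((Qop A Ainv ^^ j) \<psi>);
          return_pmf (b, 1 + 2 * j) }"

fun qsearch_rounds :: "(('n::finite) qstate \<Rightarrow> ('n::finite) qstate) \<Rightarrow> (('n::finite) qstate \<Rightarrow> ('n::finite) qstate) \<Rightarrow> ('n::finite) qstate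
    \<Rightarrow> nat list \<Rightarrow> (('n::finite) qbasis option \<times> nat) pmf" where
  "qsearch_rounds A Ainv \<psi> [] = return_pmf (None, 0)"
| "qsearch_rounds A Ainv \<psi> (M # Ms) =
     do { (b, k) \<leftarrow> qsearch_round A Ainv \<psi> M;
          if desired b then return_pmf (Some b, k)
          else do { (r, k') \<leftarrow> qsearch_rounds A Ainv \<psi> Ms; return_pmf (r, k + k') } }"

text \<open>u after round l (u is increased in round i iff ceil(c^i) > sqrt N).\<close>
definition u_count :: "real \<Rightarrow> nat \<Rightarrow> nat \<Rightarrow> nat" where
  "u_count c N l = card {i \<in> {1..l}. sqrt (real N) < real_of_int \<lceil>c ^ i\<rceil>}"

text \<open>Number of loop rounds executed (absent success): round l runs iff u after round l-1 is
  < ln tau / ln(3/4), so the rounds are l = 1..R with R the least l where u reaches the bound.\<close>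
definition num_rounds :: "real \<Rightarrow> real \<Rightarrow> nat \<Rightarrow> nat" where
  "num_rounds c \<tau> N = (LEAST l. ln \<tau> / ln (3/4) \<le> real (u_count c N l))"

definition round_params :: "real \<Rightarrow> real \<Rightarrow> nat \<Rightarrow> nat list" where
  "round_params c \<tau> N = map (\<lambda>l. nat \<lceil>c ^ l\<rceil>) [1..<num_rounds c \<tau> N + 1]"

definition modified_qsearch :: "real \<Rightarrow> real \<Rightarrow> nat \<Rightarrow> (('n::finite) qstate \<Rightarrow> ('n::finite) qstate) \<Rightarrow> (('n::finite) qstate \<Rightarrow> ('n::finite) qstate)
    \<Rightarrow> ('n::finite) qstate \<Rightarrow> (('n::finite) qbasis option \<times> nat) pmf" where
  "modified_qsearch c \<tau> N A Ainv \<psi> =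
     do { b \<leftarrow> measure_basis \<psi>;
          if desired b then return_pmf (Some b, 1)
          else do { (r, k) \<leftarrow> qsearch_rounds A Ainv \<psi> (round_params c \<tau> N); return_pmf (r, 1 + k) } }"

definition quantum_search_step :: "real \<Rightarrow> real \<Rightarrow> nat \<Rightarrow> nat \<Rightarrow> (real^'n \<Rightarrow> real) \<Rightarrow> real^'n
    \<Rightarrow> (nat \<Rightarrow> real^'n) \<Rightarrow> nat \<Rightarrow> (('n::finite) qstate \<Rightarrow> ('n::finite) qstate) \<Rightarrow> (('n::finite) qstate \<Rightarrow> ('n::finite) qstate)
    \<Rightarrow> ((real^'n) option \<times> nat) pmf" where
  "quantum_search_step c \<tau> d q f xk xs N A Ainv =
     map_pmf (\<lambda>(r, k). (map_option (\<lambda>b. fx_decode_vec q (fst b)) r, k))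
       (modified_qsearch c \<tau> N A Ainv (qss_state q f xk xs N))"

definition qss_hyps :: "(real^'n \<Rightarrow> real) \<Rightarrow> real^'n \<Rightarrow> real \<Rightarrow> real^'p^'n \<Rightarrow> real^'n^'n
    \<Rightarrow> ('p \<Rightarrow> int^'n) \<Rightarrow> (nat \<Rightarrow> real^'n) \<Rightarrow> nat \<Rightarrow> nat \<Rightarrow> nat
    \<Rightarrow> (('n::finite) qstate \<Rightarrow> ('n::finite) qstate) \<Rightarrow> (('n::finite) qstate \<Rightarrow> ('n::finite) qstate) \<Rightarrow> bool" where
  "qss_hyps f xk \<Delta> D G zs xs N d q A Ainv \<longleftrightarrow>
     0 < \<Delta> \<and> gps_directions D G zs \<and>
     0 < N \<and> inj_on xs {..<N} \<and> xs ` {..<N} \<subseteq> gps_mesh xk \<Delta> D \<and>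
     (\<forall>i. representable d q (xk $ i)) \<and> representable d q (f xk) \<and> representable d q (- f xk) \<and>
     (\<forall>j<N. (\<forall>i. representable d q (xs j $ i)) \<and> representable d q (f (xs j)) \<and>
             representable d q (f (xs j) - f xk)) \<and>
     unitary_on (qbasis_set d) A Ainv \<and> A ket0 = qss_state q f xk xs N"

definition improved_count :: "(real^'n \<Rightarrow> real) \<Rightarrow> real^'n \<Rightarrow> (nat \<Rightarrow> real^'n) \<Rightarrow> nat \<Rightarrow> nat" where
  "improved_count f xk xs N = card {j \<in> {..<N}. f (xs j) < f xk}"

end

theory Submission
  imports Defs
begin

(* Restricted to the span of the uniform superpositions over the good (improved) and the bad
   mesh points, Q is the Grover rotation by 2 theta with sin^2 theta = t/N, so a measurement after
   j applications of Q succeeds with probability sin^2((2j+1) theta).  Cost and failure of the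
   search therefore depend only on these numbers, and the analysis of Boyer, Brassard, Hoyer and
   Tapp applies: once M is of order 1 / sin 2theta a round fails with probability at most
   (c+2)/(4c), so the costs of the rounds M = ceil(c^l) form a geometric series dominated by a term
   of order sqrt(N/t); before that point the rounds succeed with probability O((c^l sin theta)^2),
   so with probability 1/2 the search runs into that order.  The tolerance tau forces at least
   ln tau / ln(3/4) rounds, which drives the failure probability to 0. *)

definition avg_success :: "(nat \<Rightarrow> real) \<Rightarrow> nat \<Rightarrow> real" where
  "avg_success P M = (\<Sum>j\<in>{1..M}. P j) / real M"

text \<open>A round with parameter M succeeds with probability avg_success P M and costs 1 + 2j oracle
  calls for j uniform in [1, M], that is M + 2 on average.\<close>
fun expected_cost :: "(nat \<Rightarrow> real) \<Rightarrow> nat list \<Rightarrow> real" where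
  "expected_cost P [] = 0"
| "expected_cost P (M # Ms) = (real M + 2) + (1 - avg_success P M) * expected_cost P Ms"

fun failure_prob :: "(nat \<Rightarrow> real) \<Rightarrow> nat list \<Rightarrow> real" where
  "failure_prob P [] = 1"
| "failure_prob P (M # Ms) = (1 - avg_success P M) * failure_prob P Ms"

definition round_size :: "real \<Rightarrow> nat \<Rightarrow> nat" where
  "round_size c l = nat \<lceil>c ^ l\<rceil>"

lemma avg_success_bounds:
  assumes P: "\<And>j. 0 \<le> P j \<and> P j \<le> 1"
  shows "0 \<le> avg_success P M" "avg_success P M \<le> 1"
proof -
  have "(\<Sum>j\<in>{1..M}. P j) \<le> real M"
    using sum_mono[of "{1..M}" P "\<lambda>_. 1"] P by simp
  moreover have "0 \<le> (\<Sum>j\<in>{1..M}. P j)" by (rule sum_nonneg) (use P in auto)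
  ultimately show "0 \<le> avg_success P M" "avg_success P M \<le> 1"
    unfolding avg_success_def by (auto simp: divide_le_eq)
qed

lemma expected_cost_nonneg:
  assumes P: "\<And>j. 0 \<le> P j \<and> P j \<le> 1"
  shows "0 \<le> expected_cost P Ms"
  by (induction Ms) (simp_all add: avg_success_bounds[OF P])

lemma failure_prob_nonneg:
  assumes P: "\<And>j. 0 \<le> P j \<and> P j \<le> 1"
  shows "0 \<le> failure_prob P Ms"
  by (induction Ms) (simp_all add: avg_success_bounds[OF P])

lemma expected_cost_append_le:
  assumes P: "\<And>j. 0 \<le> P j \<and> P j \<le> 1"
  shows "expected_cost P (Ms @ Ms') \<le> (\<Sum>M\<leftarrow>Ms. real M + 2) + expected_cost P Ms'"
proof (induction Ms)
  case Nil then show ?case by simp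
next
  case (Cons M Ms)
  have "(1 - avg_success P M) * expected_cost P (Ms @ Ms') \<le> expected_cost P (Ms @ Ms')"
    using avg_success_bounds[OF P] expected_cost_nonneg[OF P] by (simp add: mult_left_le_one_le)
  then show ?case using Cons by simp
qed

lemma round_size_ge: "c ^ l \<le> real (round_size c l)"
  unfolding round_size_def by linarith

lemma round_size_less:
  assumes "0 \<le> c"
  shows "real (round_size c l) < c ^ l + 1"
proof -
  have "0 \<le> c ^ l" using assms by simp
  then show ?thesis unfolding round_size_def by linarith
qed

lemma round_params_eq: "round_params c \<tau> N = map (round_size c) [1..<num_rounds c \<tau> N + 1]"
  unfolding round_params_def round_size_def by simp

lemma round_size_pos: "1 \<le> c \<Longrightarrow> 1 \<le> round_size c l"
  using round_size_ge[of c l] one_le_power[of c l] by linarith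

lemma round_params_pos: "1 \<le> c \<Longrightarrow> \<forall>M\<in>set (round_params c \<tau> N). 1 \<le> M"
  unfolding round_params_eq using round_size_pos by auto

text \<open>The failure factor (c + 2) / (4c) times the growth factor c of the round sizes is
  (c + 2) / 4 < 1, so the costs form a geometric series dominated by its first term.\<close>
lemma expected_cost_geometric_le:
  assumes c: "1 < c" "c < 2" and P: "\<And>j. 0 \<le> P j \<and> P j \<le> 1"
    and fail: "\<And>i. m \<le> i \<Longrightarrow> i < n \<Longrightarrow> 1 - avg_success P (round_size c i) \<le> (c + 2) / (4 * c)"
  shows "expected_cost P (map (round_size c) [m..<n]) \<le> 16 / (2 - c) * c ^ m"
  using fail
proof (induction "n - m" arbitrary: m)
  case 0
  then show ?case using c by simp
next
  case (Suc k)
  then have mn: "m < n" by simp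
  define f where "f = 1 - avg_success P (round_size c m)"
  define r where "r = expected_cost P (map (round_size c) [Suc m..<n])"
  have r0: "0 \<le> r" unfolding r_def by (rule expected_cost_nonneg[OF P])
  have IH: "r \<le> 16 / (2 - c) * c ^ Suc m"
    unfolding r_def using Suc by (metis Suc_diff_Suc Suc_leD diff_Suc_1 mn)
  have f: "f \<le> (c + 2) / (4 * c)" unfolding f_def using Suc.prems mn by simp
  have size: "real (round_size c m) + 2 \<le> 4 * c ^ m"
    using round_size_less[of c m] one_le_power[of c m] c by linarith
  have "f * r \<le> (c + 2) / (4 * c) * (16 / (2 - c) * c ^ Suc m)"
    by (rule mult_mono[OF f IH]) (use c r0 in auto)
  also have "\<dots> = (c + 2) * 4 / (2 - c) * c ^ m" using c by (simp add: field_simps)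
  finally have "real (round_size c m) + 2 + f * r \<le> 4 * c ^ m + (c + 2) * 4 / (2 - c) * c ^ m"
    using size by linarith
  also have "\<dots> = 16 / (2 - c) * c ^ m" using c by (simp add: field_simps)
  finally show ?case using mn by (simp add: upt_conv_Cons f_def r_def)
qed

lemma expected_cost_schedule_le:
  assumes c: "1 < c" "c < 2" and P: "\<And>j. 0 \<le> P j \<and> P j \<le> 1"
    and fail: "\<And>i. L \<le> i \<Longrightarrow> 1 - avg_success P (round_size c i) \<le> (c + 2) / (4 * c)"
  shows "expected_cost P (map (round_size c) [1..<n]) \<le> (16 / (2 - c) + 4 / (c - 1)) * c ^ max 1 L"
proof (cases "n = 0")
  case True
  then show ?thesis using c by simp
next
  case False
  define k where "k = max 1 (min n L)"
  have k: "1 \<le> k" "k \<le> n" "k \<le> max 1 L" unfolding k_def using False by auto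
  have split: "[1..<n] = [1..<k] @ [k..<n]"
    using upt_add_eq_append[of 1 k "n - k"] k by simp
  have "(\<Sum>M\<leftarrow>map (round_size c) [1..<k]. real M + 2) = (\<Sum>i\<in>{1..<k}. real (round_size c i) + 2)"
    by (simp add: sum_set_upt_conv_sum_list_nat[symmetric] comp_def)
  also have "\<dots> \<le> (\<Sum>i<k. 4 * c ^ i)"
  proof -
    have "(\<Sum>i\<in>{1..<k}. real (round_size c i) + 2) \<le> (\<Sum>i\<in>{1..<k}. 4 * c ^ i)"
    proof (rule sum_mono)
      show "real (round_size c i) + 2 \<le> 4 * c ^ i" for i
        using round_size_less[of c i] one_le_power[of c i] c by linarith
    qed
    also have "\<dots> \<le> (\<Sum>i<k. 4 * c ^ i)"
      using c by (intro sum_mono2) auto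
    finally show ?thesis .
  qed
  also have "\<dots> = 4 * (c ^ k - 1) / (c - 1)"
    using c by (simp add: sum_distrib_left[symmetric] geometric_sum)
  also have "\<dots> \<le> 4 / (c - 1) * c ^ k"
    using c by (simp add: divide_right_mono)
  also have "\<dots> \<le> 4 / (c - 1) * c ^ max 1 L"
    using c power_increasing[OF k(3), of c] by (intro mult_left_mono) auto
  finally have head: "(\<Sum>M\<leftarrow>map (round_size c) [1..<k]. real M + 2) \<le> 4 / (c - 1) * c ^ max 1 L" .
  have "expected_cost P (map (round_size c) [k..<n]) \<le> 16 / (2 - c) * c ^ k"
    using fail k_def by (intro expected_cost_geometric_le[OF c P]) auto
  also have "\<dots> \<le> 16 / (2 - c) * c ^ max 1 L"
    using c power_increasing[OF k(3), of c] by (intro mult_left_mono) auto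
  finally have tail: "expected_cost P (map (round_size c) [k..<n]) \<le> 16 / (2 - c) * c ^ max 1 L" .
  show ?thesis
    using expected_cost_append_le[of P "map (round_size c) [1..<k]" "map (round_size c) [k..<n]", OF P] head tail
    unfolding split map_append by (simp add: distrib_right)
qed

lemma failure_prob_le_power:
  assumes P: "\<And>j. 0 \<le> P j \<and> P j \<le> 1" and q: "0 \<le> q"
    and fail: "\<And>i. L \<le> i \<Longrightarrow> 1 - avg_success P (g i) \<le> q"
  shows "failure_prob P (map g [m..<n]) \<le> q ^ (n - max m L)"
proof (induction "n - m" arbitrary: m)
  case 0
  then show ?case by simp
next
  case (Suc k)
  then have mn: "m < n" by simp
  have IH: "failure_prob P (map g [Suc m..<n]) \<le> q ^ (n - max (Suc m) L)" using Suc by simp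
  define f where "f = 1 - avg_success P (g m)"
  define r where "r = failure_prob P (map g [Suc m..<n])"
  have f01: "0 \<le> f" "f \<le> 1" unfolding f_def using avg_success_bounds[OF P] by auto
  have r0: "0 \<le> r" unfolding r_def by (rule failure_prob_nonneg[OF P])
  have eq: "failure_prob P (map g [m..<n]) = f * r"
    using mn by (simp add: upt_conv_Cons f_def r_def)
  show ?case
  proof (cases "L \<le> m")
    case True
    have "f \<le> q" unfolding f_def using fail True by simp
    moreover have "r \<le> q ^ (n - Suc m)" using IH True unfolding r_def by simp
    ultimately have "f * r \<le> q * q ^ (n - Suc m)" by (rule mult_mono) (use q r0 in auto)
    also have "\<dots> = q ^ (n - m)" using mn by (simp add: power_Suc[symmetric] Suc_diff_Suc)
    finally show ?thesis using eq True by simp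
  next
    case False
    have "f * r \<le> r" using f01 r0 by (simp add: mult_left_le_one_le)
    moreover have "max (Suc m) L = max m L" using False by simp
    ultimately show ?thesis using eq IH unfolding r_def by simp
  qed
qed

text \<open>Round l is reached unless an earlier round succeeds, and it alone costs at least g l.\<close>
lemma expected_cost_ge_reached_round:
  assumes P: "\<And>j. 0 \<le> P j \<and> P j \<le> 1"
  shows "m \<le> l \<Longrightarrow> l < n \<Longrightarrow>
    (1 - (\<Sum>i\<in>{m..<l}. avg_success P (g i))) * real (g l) \<le> expected_cost P (map g [m..<n])"
proof (induction "n - m" arbitrary: m)
  case 0
  then show ?case by simp
next
  case (Suc k)
  then have mn: "m < n" by simp
  define f where "f = 1 - avg_success P (g m)"
  define r where "r = expected_cost P (map g [Suc m..<n])"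
  have f01: "0 \<le> f" "f \<le> 1" unfolding f_def using avg_success_bounds[OF P] by auto
  have r0: "0 \<le> r" unfolding r_def by (rule expected_cost_nonneg[OF P])
  have eq: "expected_cost P (map g [m..<n]) = real (g m) + 2 + f * r"
    using mn by (simp add: upt_conv_Cons f_def r_def)
  show ?case
  proof (cases "m = l")
    case True
    then show ?thesis using eq f01 r0 by simp
  next
    case False
    then have ml: "m < l" using Suc by simp
    define S where "S = (\<Sum>i\<in>{Suc m..<l}. avg_success P (g i))"
    have S0: "0 \<le> S" unfolding S_def by (rule sum_nonneg) (use avg_success_bounds[OF P] in auto)
    have IH: "(1 - S) * real (g l) \<le> r" using Suc ml unfolding S_def r_def by simp
    have sum_eq: "(\<Sum>i\<in>{m..<l}. avg_success P (g i)) = (1 - f) + S"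
      using ml unfolding S_def f_def by (simp add: sum.atLeast_Suc_lessThan)
    have "1 - ((1 - f) + S) \<le> f * (1 - S)"
      using f01 S0 mult_left_le_one_le[of S f] by (simp add: algebra_simps)
    then have "(1 - ((1 - f) + S)) * real (g l) \<le> f * (1 - S) * real (g l)"
      by (rule mult_right_mono) simp
    also have "\<dots> = f * ((1 - S) * real (g l))" by (simp only: mult.assoc)
    also have "\<dots> \<le> f * r" using IH f01 by (simp add: mult_left_mono)
    finally show ?thesis using sum_eq eq r0 by simp
  qed
qed

section \<open>The search as a sequence of Bernoulli rounds\<close>

text \<open>The outcome of the search reduced to (success, number of oracle calls), when the
  measurement after j applications of Q succeeds with probability P j.\<close>
fun outcome_rounds :: "(nat \<Rightarrow> real) \<Rightarrow> nat list \<Rightarrow> (bool \<times> nat) pmf" where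
  "outcome_rounds P [] = return_pmf (False, 0)"
| "outcome_rounds P (M # Ms) =
     do { j \<leftarrow> pmf_of_set {1..M};
          s \<leftarrow> bernoulli_pmf (P j);
          if s then return_pmf (True, 1 + 2 * j)
          else map_pmf (\<lambda>x. (fst x, 1 + 2 * j + snd x)) (outcome_rounds P Ms) }"

definition outcome_search :: "(nat \<Rightarrow> real) \<Rightarrow> nat list \<Rightarrow> (bool \<times> nat) pmf" where
  "outcome_search P Ms =
     do { s \<leftarrow> bernoulli_pmf (P 0);
          if s then return_pmf (True, 1) else map_pmf (\<lambda>x. (fst x, 1 + snd x)) (outcome_rounds P Ms) }"

definition found_and_cost :: "'b option \<times> nat \<Rightarrow> bool \<times> nat" where
  "found_and_cost x = (fst x \<noteq> None, snd x)"

lemma finite_set_outcome_rounds: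
  assumes "\<forall>M\<in>set Ms. 1 \<le> M"
  shows "finite (set_pmf (outcome_rounds P Ms))"
  using assms
proof (induction Ms)
  case Nil then show ?case by simp
next
  case (Cons M Ms)
  then have M: "{1..M} \<noteq> {}" by simp
  have "finite (set_pmf (bernoulli_pmf (P j)))" for j by (rule finite_subset[of _ UNIV]) auto
  then show ?case using Cons by (auto simp: set_pmf_of_set[OF M])
qed

lemma expectation_outcome_rounds_Cons:
  fixes h :: "bool \<times> nat \<Rightarrow> real"
  assumes M: "1 \<le> M" and Ms: "\<forall>M\<in>set Ms. 1 \<le> M" and P: "\<And>j. 0 \<le> P j \<and> P j \<le> 1"
  shows "measure_pmf.expectation (outcome_rounds P (M # Ms)) h =
    (\<Sum>j\<in>{1..M}. P j * h (True, 1 + 2 * j) +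
       (1 - P j) * measure_pmf.expectation (outcome_rounds P Ms) (\<lambda>x. h (fst x, 1 + 2 * j + snd x))) / real M"
proof -
  define G where "G = (\<lambda>j s. if s then return_pmf (True, 1 + 2 * j)
     else map_pmf (\<lambda>x. (fst x, 1 + 2 * j + snd x)) (outcome_rounds P Ms))"
  have fin_G: "finite (set_pmf (G j s))" for j s
    unfolding G_def using finite_set_outcome_rounds[OF Ms] by auto
  have fin_B: "finite (set_pmf (bernoulli_pmf (P j) \<bind> G j))" for j
  proof -
    have "finite (set_pmf (bernoulli_pmf (P j)))" by (rule finite_subset[of _ UNIV]) auto
    then show ?thesis using fin_G by (simp only: set_bind_pmf) blast
  qed
  have inner: "measure_pmf.expectation (bernoulli_pmf (P j) \<bind> G j) h =
      P j * h (True, 1 + 2 * j) + (1 - P j) * measure_pmf.expectation (outcome_rounds P Ms) (\<lambda>x. h (fst x, 1 + 2 * j + snd x))" for j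
  proof -
    have "measure_pmf.expectation (bernoulli_pmf (P j) \<bind> G j) h =
        (\<Sum>s\<in>UNIV. pmf (bernoulli_pmf (P j)) s *\<^sub>R measure_pmf.expectation (G j s) h)"
      by (rule pmf_expectation_bind) (auto simp: fin_G)
    then show ?thesis using P[of j] by (simp add: UNIV_bool G_def)
  qed
  have "outcome_rounds P (M # Ms) = pmf_of_set {1..M} \<bind> (\<lambda>j. bernoulli_pmf (P j) \<bind> G j)"
    by (simp add: G_def)
  then have "measure_pmf.expectation (outcome_rounds P (M # Ms)) h =
     (\<Sum>j\<in>{1..M}. measure_pmf.expectation (bernoulli_pmf (P j) \<bind> G j) h /\<^sub>R real (card {1..M}))"
    by (simp only:) (rule pmf_expectation_bind_pmf_of_set, use M fin_B in auto)
  also have "\<dots> = (\<Sum>j\<in>{1..M}. measure_pmf.expectation (bernoulli_pmf (P j) \<bind> G j) h) / real M"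
    by (simp add: sum_distrib_left[symmetric] divide_inverse_commute)
  finally show ?thesis unfolding inner .
qed

lemma expectation_outcome_search:
  fixes h :: "bool \<times> nat \<Rightarrow> real"
  assumes Ms: "\<forall>M\<in>set Ms. 1 \<le> M" and P: "\<And>j. 0 \<le> P j \<and> P j \<le> 1"
  shows "measure_pmf.expectation (outcome_search P Ms) h =
     P 0 * h (True, 1) + (1 - P 0) * measure_pmf.expectation (outcome_rounds P Ms) (\<lambda>x. h (fst x, 1 + snd x))"
proof -
  define G where "G = (\<lambda>s. if s then return_pmf (True, 1)
     else map_pmf (\<lambda>x. (fst x, 1 + snd x)) (outcome_rounds P Ms))"
  have "finite (set_pmf (G s))" for s
    unfolding G_def using finite_set_outcome_rounds[OF Ms] by auto
  then have "measure_pmf.expectation (outcome_search P Ms) h =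
        (\<Sum>s\<in>UNIV. pmf (bernoulli_pmf (P 0)) s *\<^sub>R measure_pmf.expectation (G s) h)"
    unfolding outcome_search_def G_def[symmetric] by (intro pmf_expectation_bind) auto
  then show ?thesis using P[of 0] by (simp add: UNIV_bool G_def)
qed

lemma sum_odd_numbers: "(\<Sum>j\<in>{1..M}. 1 + 2 * real j) = real M * (real M + 2)"
  by (induction M) (simp_all add: algebra_simps)

lemma expected_calls_outcome_rounds:
  assumes Ms: "\<forall>M\<in>set Ms. 1 \<le> M" and P: "\<And>j. 0 \<le> P j \<and> P j \<le> 1"
  shows "measure_pmf.expectation (outcome_rounds P Ms) (\<lambda>x. real (snd x)) = expected_cost P Ms"
  using Ms
proof (induction Ms)
  case Nil then show ?case by simp
next
  case (Cons M Ms)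
  then have M: "1 \<le> M" and Ms': "\<forall>M\<in>set Ms. 1 \<le> M" by auto
  define E where "E = expected_cost P Ms"
  have int: "integrable (measure_pmf (outcome_rounds P Ms)) (\<lambda>x. real (snd x))"
    by (rule integrable_measure_pmf_finite[OF finite_set_outcome_rounds[OF Ms']])
  have shift: "measure_pmf.expectation (outcome_rounds P Ms) (\<lambda>x. real (snd (fst x, 1 + 2 * j + snd x)))
      = (1 + 2 * real j) + E" for j
  proof -
    have "measure_pmf.expectation (outcome_rounds P Ms) (\<lambda>x. real (snd (fst x, 1 + 2 * j + snd x)))
        = measure_pmf.expectation (outcome_rounds P Ms) (\<lambda>x. (1 + 2 * real j) + real (snd x))"
      by (simp add: add.assoc)
    then show ?thesis using int Cons.IH[OF Ms'] unfolding E_def by simp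
  qed
  have "measure_pmf.expectation (outcome_rounds P (M # Ms)) (\<lambda>x. real (snd x)) =
     (\<Sum>j\<in>{1..M}. (1 + 2 * real j) + E - P j * E) / real M"
    unfolding expectation_outcome_rounds_Cons[OF M Ms' P] shift by (simp add: algebra_simps)
  also have "\<dots> = (real M * (real M + 2) + real M * E - (\<Sum>j\<in>{1..M}. P j) * E) / real M"
  proof -
    have "(\<Sum>j\<in>{1..M}. (1 + 2 * real j) + E - P j * E) =
        (\<Sum>j\<in>{1..M}. 1 + 2 * real j) + (\<Sum>j\<in>{1..M}. E) - (\<Sum>j\<in>{1..M}. P j) * E"
      by (simp only: sum_subtractf sum.distrib sum_distrib_right)
    then show ?thesis unfolding sum_odd_numbers by simp
  qed
  also have "\<dots> = expected_cost P (M # Ms)"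
    using M by (simp add: E_def avg_success_def field_simps)
  finally show ?case .
qed

lemma failure_outcome_rounds:
  assumes Ms: "\<forall>M\<in>set Ms. 1 \<le> M" and P: "\<And>j. 0 \<le> P j \<and> P j \<le> 1"
  shows "measure_pmf.expectation (outcome_rounds P Ms) (\<lambda>x. if fst x then 0 else 1) = failure_prob P Ms"
  using Ms
proof (induction Ms)
  case Nil then show ?case by simp
next
  case (Cons M Ms)
  then have M: "1 \<le> M" and Ms': "\<forall>M\<in>set Ms. 1 \<le> M" by auto
  have "measure_pmf.expectation (outcome_rounds P (M # Ms)) (\<lambda>x. if fst x then 0 else 1 :: real) =
     (\<Sum>j\<in>{1..M}. (1 - P j) * failure_prob P Ms) / real M"
    unfolding expectation_outcome_rounds_Cons[OF M Ms' P] using Cons.IH[OF Ms'] by simp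
  also have "\<dots> = failure_prob P (M # Ms)"
    using M by (simp add: sum_subtractf sum_distrib_right[symmetric] avg_success_def field_simps)
  finally show ?case .
qed

lemma expected_calls_outcome_search:
  assumes Ms: "\<forall>M\<in>set Ms. 1 \<le> M" and P: "\<And>j. 0 \<le> P j \<and> P j \<le> 1"
  shows "measure_pmf.expectation (outcome_search P Ms) (\<lambda>x. real (snd x)) = 1 + (1 - P 0) * expected_cost P Ms"
proof -
  have "integrable (measure_pmf (outcome_rounds P Ms)) (\<lambda>x. real (snd x))"
    by (rule integrable_measure_pmf_finite[OF finite_set_outcome_rounds[OF Ms]])
  then have "measure_pmf.expectation (outcome_rounds P Ms) (\<lambda>x. real (1 + snd x)) = 1 + expected_cost P Ms"
    using expected_calls_outcome_rounds[OF Ms P] by simp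
  then show ?thesis unfolding expectation_outcome_search[OF Ms P] by (simp add: algebra_simps)
qed

lemma failure_outcome_search:
  assumes Ms: "\<forall>M\<in>set Ms. 1 \<le> M" and P: "\<And>j. 0 \<le> P j \<and> P j \<le> 1"
  shows "measure_pmf.prob (outcome_search P Ms) {x. \<not> fst x} = (1 - P 0) * failure_prob P Ms"
proof -
  have "measure_pmf.prob (outcome_search P Ms) {x. \<not> fst x} =
      measure_pmf.expectation (outcome_search P Ms) (indicator {x. \<not> fst x})"
    by simp
  also have "\<dots> = measure_pmf.expectation (outcome_search P Ms) (\<lambda>x. if fst x then 0 else 1)"
    by (rule Bochner_Integration.integral_cong) (auto simp: indicator_def)
  finally show ?thesis
    unfolding expectation_outcome_search[OF Ms P] using failure_outcome_rounds[OF Ms P] by simp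
qed

section \<open>Success probabilities of Grover iterates\<close>

definition grover_success :: "real \<Rightarrow> nat \<Rightarrow> real" where
  "grover_success \<theta> j = (sin ((2 * real j + 1) * \<theta>))\<^sup>2"

lemma sum_cos_odd_multiples:
  "2 * sin x * (\<Sum>j\<in>{1..M}. cos ((2 * real j + 1) * x)) = sin ((2 * real M + 2) * x) - sin (2 * x)"
proof (induction M)
  case 0 then show ?case by simp
next
  case (Suc M)
  have product_to_sum: "2 * sin x * cos y = sin (y + x) - sin (y - x)" for y
    by (simp add: sin_add sin_diff)
  have "(2 * real (Suc M) + 1) * x + x = (2 * real (Suc M) + 2) * x"
    "(2 * real (Suc M) + 1) * x - x = (2 * real M + 2) * x"
    by (simp_all add: algebra_simps)
  then have "2 * sin x * cos ((2 * real (Suc M) + 1) * x) =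
      sin ((2 * real (Suc M) + 2) * x) - sin ((2 * real M + 2) * x)"
    using product_to_sum[of "(2 * real (Suc M) + 1) * x"] by simp
  then show ?case using Suc by (simp add: algebra_simps)
qed

lemma abs_sin_mult_le: "\<bar>sin (real n * x)\<bar> \<le> real n * \<bar>sin x\<bar>"
proof (induction n)
  case 0 then show ?case by simp
next
  case (Suc n)
  have "sin (real (Suc n) * x) = sin (real n * x) * cos x + cos (real n * x) * sin x"
    by (simp add: distrib_right sin_add)
  then have "\<bar>sin (real (Suc n) * x)\<bar> \<le> \<bar>sin (real n * x)\<bar> * \<bar>cos x\<bar> + \<bar>cos (real n * x)\<bar> * \<bar>sin x\<bar>"
    by (simp add: abs_mult[symmetric] abs_triangle_ineq)
  also have "\<dots> \<le> \<bar>sin (real n * x)\<bar> * 1 + 1 * \<bar>sin x\<bar>"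
    by (intro add_mono mult_mono) auto
  finally show ?case using Suc by (simp add: algebra_simps)
qed

text \<open>Averaging over j turns the oscillating part of sin^2 into a telescoping sum of
  cosines, which is O(1 / (M sin 2 theta)).\<close>
lemma avg_grover_failure_le:
  assumes M: "1 \<le> M" and s2: "0 < sin (2 * \<theta>)"
  shows "1 - avg_success (grover_success \<theta>) M \<le> 1/2 + 1 / (2 * real M * sin (2 * \<theta>))"
proof -
  define C where "C = (\<Sum>j\<in>{1..M}. cos ((2 * real j + 1) * (2 * \<theta>)))"
  have sq: "grover_success \<theta> j = 1/2 - cos ((2 * real j + 1) * (2 * \<theta>)) / 2" for j
  proof -
    have e: "(2 * real j + 1) * (2 * \<theta>) = 2 * ((2 * real j + 1) * \<theta>)" by simp
    have "cos ((2 * real j + 1) * (2 * \<theta>)) = 1 - 2 * (sin ((2 * real j + 1) * \<theta>))\<^sup>2"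
      by (subst e) (rule cos_double_sin)
    then show ?thesis unfolding grover_success_def by linarith
  qed
  have sum_eq: "(\<Sum>j\<in>{1..M}. grover_success \<theta> j) = real M / 2 - C / 2"
    unfolding sq C_def by (simp add: sum_subtractf sum_divide_distrib)
  have "2 * sin (2 * \<theta>) * C = sin ((2 * real M + 2) * (2 * \<theta>)) - sin (2 * (2 * \<theta>))"
    unfolding C_def by (rule sum_cos_odd_multiples)
  then have "2 * sin (2 * \<theta>) * C \<le> 2"
    using abs_sin_le_one[of "(2 * real M + 2) * (2 * \<theta>)"] abs_sin_le_one[of "2 * (2 * \<theta>)"] by linarith
  then have C: "C \<le> 1 / sin (2 * \<theta>)" using s2 by (simp add: field_simps)
  have "1 - avg_success (grover_success \<theta>) M = 1/2 + C / (2 * real M)"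
    unfolding avg_success_def sum_eq using M by (simp add: field_simps)
  also have "\<dots> \<le> 1/2 + (1 / sin (2 * \<theta>)) / (2 * real M)"
    using divide_right_mono[OF C, of "2 * real M"] M by simp
  finally show ?thesis by (simp add: mult.commute)
qed

lemma avg_grover_failure_le_threshold:
  assumes c: "1 < c" "c < 2" and s2: "0 < sin (2 * \<theta>)"
    and M: "2 * c / ((2 - c) * sin (2 * \<theta>)) \<le> real M"
  shows "1 - avg_success (grover_success \<theta>) M \<le> (c + 2) / (4 * c)"
proof -
  define X where "X = 2 * c / ((2 - c) * sin (2 * \<theta>))"
  have X0: "0 < X" unfolding X_def using c s2 by simp
  then have M1: "1 \<le> M" using M unfolding X_def by linarith
  have "1 - avg_success (grover_success \<theta>) M \<le> 1/2 + 1 / (2 * real M * sin (2 * \<theta>))"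
    by (rule avg_grover_failure_le[OF M1 s2])
  also have "\<dots> \<le> 1/2 + 1 / (2 * X * sin (2 * \<theta>))"
    using M X0 s2 unfolding X_def[symmetric]
    by (intro add_left_mono divide_left_mono mult_right_mono mult_left_mono mult_pos_pos) auto
  also have "\<dots> = (c + 2) / (4 * c)"
    unfolding X_def using s2 c by (simp add: field_simps)
  finally show ?thesis .
qed

lemma avg_grover_success_le:
  "avg_success (grover_success \<theta>) M \<le> (2 * real M + 1)\<^sup>2 * (sin \<theta>)\<^sup>2"
proof (cases "M = 0")
  case True then show ?thesis by (simp add: avg_success_def)
next
  case False
  have bound: "grover_success \<theta> j \<le> (2 * real M + 1)\<^sup>2 * (sin \<theta>)\<^sup>2" if "j \<in> {1..M}" for j
  proof -
    have "\<bar>sin (real (2 * j + 1) * \<theta>)\<bar> \<le> real (2 * j + 1) * \<bar>sin \<theta>\<bar>" by (rule abs_sin_mult_le)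
    also have "\<dots> \<le> (2 * real M + 1) * \<bar>sin \<theta>\<bar>" using that by (intro mult_right_mono) auto
    finally have "\<bar>sin ((2 * real j + 1) * \<theta>)\<bar> \<le> (2 * real M + 1) * \<bar>sin \<theta>\<bar>" by (simp add: add.commute)
    then have "\<bar>sin ((2 * real j + 1) * \<theta>)\<bar>\<^sup>2 \<le> ((2 * real M + 1) * \<bar>sin \<theta>\<bar>)\<^sup>2"
      by (rule power_mono) simp
    then show ?thesis unfolding grover_success_def by (simp add: power_mult_distrib)
  qed
  have "(\<Sum>j\<in>{1..M}. grover_success \<theta> j) \<le> real M * ((2 * real M + 1)\<^sup>2 * (sin \<theta>)\<^sup>2)"
    using sum_mono[of "{1..M}", OF bound] by simp
  then show ?thesis unfolding avg_success_def using False by (simp add: field_simps)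
qed

lemma sum_avg_grover_success_le:
  assumes c: "1 < c"
  shows "(\<Sum>i\<in>{1..<l}. avg_success (grover_success \<theta>) (round_size c i)) \<le> 25 * (c ^ l * sin \<theta>)\<^sup>2 / (c\<^sup>2 - 1)"
proof -
  have c2: "1 < c\<^sup>2" using c by (simp add: one_less_power)
  have "avg_success (grover_success \<theta>) (round_size c i) \<le> 25 * (sin \<theta>)\<^sup>2 * (c\<^sup>2) ^ i" for i
  proof -
    have "2 * real (round_size c i) + 1 \<le> 5 * c ^ i"
      using round_size_less[of c i] one_le_power[of c i] c by linarith
    then have "(2 * real (round_size c i) + 1)\<^sup>2 * (sin \<theta>)\<^sup>2 \<le> (5 * c ^ i)\<^sup>2 * (sin \<theta>)\<^sup>2"
      by (intro mult_right_mono power_mono) auto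
    moreover have "(5 * c ^ i)\<^sup>2 * (sin \<theta>)\<^sup>2 = 25 * (sin \<theta>)\<^sup>2 * (c\<^sup>2) ^ i"
      by (simp add: power_mult_distrib power_mult[symmetric] mult_ac)
    ultimately show ?thesis using avg_grover_success_le[of \<theta> "round_size c i"] by linarith
  qed
  then have "(\<Sum>i\<in>{1..<l}. avg_success (grover_success \<theta>) (round_size c i)) \<le> (\<Sum>i\<in>{1..<l}. 25 * (sin \<theta>)\<^sup>2 * (c\<^sup>2) ^ i)"
    by (rule sum_mono)
  also have "\<dots> \<le> (\<Sum>i<l. 25 * (sin \<theta>)\<^sup>2 * (c\<^sup>2) ^ i)"
    by (rule sum_mono2) auto
  also have "\<dots> = 25 * (sin \<theta>)\<^sup>2 * (((c\<^sup>2) ^ l - 1) / (c\<^sup>2 - 1))"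
    using c2 by (simp add: sum_distrib_left[symmetric] geometric_sum)
  also have "\<dots> \<le> 25 * (sin \<theta>)\<^sup>2 * ((c\<^sup>2) ^ l / (c\<^sup>2 - 1))"
    using c2 by (intro mult_left_mono divide_right_mono) auto
  also have "\<dots> = 25 * (c ^ l * sin \<theta>)\<^sup>2 / (c\<^sup>2 - 1)"
    by (simp add: power_mult_distrib power_mult[symmetric] mult.commute)
  finally show ?thesis .
qed

text \<open>In coordinates a = sin phi / sigma, b = cos phi / kappa the Grover step is the rotation
  phi \<mapsto> phi + 2 theta, where sin theta = sigma / nu and cos theta = kappa / nu.\<close>
lemma grover_rotation:
  fixes \<sigma> \<kappa> \<nu> \<theta> \<phi> :: real
  assumes pos: "\<sigma> > 0" "\<kappa> > 0" "\<nu> > 0" and nu: "\<nu>\<^sup>2 = \<sigma>\<^sup>2 + \<kappa>\<^sup>2"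
    and st: "sin \<theta> = \<sigma> / \<nu>" and ct: "cos \<theta> = \<kappa> / \<nu>"
  defines "m \<equiv> ((cos \<phi> / \<kappa>) * \<kappa>\<^sup>2 - (sin \<phi> / \<sigma>) * \<sigma>\<^sup>2) / \<nu>\<^sup>2"
  shows "sin (\<phi> + 2 * \<theta>) / \<sigma> = sin \<phi> / \<sigma> + 2 * m"
    and "cos (\<phi> + 2 * \<theta>) / \<kappa> = 2 * m - cos \<phi> / \<kappa>"
proof -
  have s2: "sin (2 * \<theta>) = 2 * \<sigma> * \<kappa> / \<nu>\<^sup>2" using st ct by (simp add: sin_double power2_eq_square)
  have c2: "cos (2 * \<theta>) = (\<kappa>\<^sup>2 - \<sigma>\<^sup>2) / \<nu>\<^sup>2"
    using st ct by (simp add: cos_double power_divide diff_divide_distrib)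
  have "sin \<phi> / \<sigma> + 2 * m = (sin \<phi> * \<nu>\<^sup>2 - 2 * \<sigma>\<^sup>2 * sin \<phi> + 2 * \<sigma> * \<kappa> * cos \<phi>) / (\<sigma> * \<nu>\<^sup>2)"
    unfolding m_def using pos by (simp add: field_simps power2_eq_square)
  also have "\<dots> = (sin \<phi> * (\<kappa>\<^sup>2 - \<sigma>\<^sup>2) + 2 * \<sigma> * \<kappa> * cos \<phi>) / (\<sigma> * \<nu>\<^sup>2)"
    by (simp add: nu algebra_simps)
  also have "\<dots> = sin (\<phi> + 2 * \<theta>) / \<sigma>"
    unfolding sin_add s2 c2 using pos by (simp add: field_simps)
  finally show "sin (\<phi> + 2 * \<theta>) / \<sigma> = sin \<phi> / \<sigma> + 2 * m" ..
  have "2 * m - cos \<phi> / \<kappa> = (2 * \<kappa>\<^sup>2 * cos \<phi> - 2 * \<sigma> * \<kappa> * sin \<phi> - cos \<phi> * \<nu>\<^sup>2) / (\<kappa> * \<nu>\<^sup>2)"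
    unfolding m_def using pos by (simp add: field_simps power2_eq_square)
  also have "\<dots> = (cos \<phi> * (\<kappa>\<^sup>2 - \<sigma>\<^sup>2) - 2 * \<sigma> * \<kappa> * sin \<phi>) / (\<kappa> * \<nu>\<^sup>2)"
    by (simp add: nu algebra_simps)
  also have "\<dots> = cos (\<phi> + 2 * \<theta>) / \<kappa>"
    unfolding cos_add s2 c2 using pos by (simp add: field_simps)
  finally show "cos (\<phi> + 2 * \<theta>) / \<kappa> = 2 * m - cos \<phi> / \<kappa>" ..
qed

lemma power_bracket:
  fixes c x :: real
  assumes c: "1 < c" and x: "1 \<le> x"
  obtains l where "c ^ l \<le> x" "x < c ^ Suc l"
proof -
  define L where "L = (LEAST l. x < c ^ l)"
  have ex: "\<exists>l. x < c ^ l" using real_arch_pow[OF c] by blast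
  have xL: "x < c ^ L" unfolding L_def by (rule LeastI_ex[OF ex])
  then obtain l where l: "L = Suc l" using x by (cases L) auto
  then have "\<not> x < c ^ l" unfolding L_def by (metis lessI not_less_Least)
  then show ?thesis using that[of l] xL l by (simp add: not_less)
qed

lemma power_cover:
  fixes c x :: real
  assumes c: "1 < c"
  obtains L where "x \<le> c ^ L" "c ^ L \<le> max 1 (c * x)"
proof (cases "x \<le> 1")
  case True
  then show ?thesis using that[of 0] by simp
next
  case False
  then have "1 \<le> x" by simp
  then obtain l where l: "c ^ l \<le> x" "x < c ^ Suc l" by (rule power_bracket[OF c])
  have "c * c ^ l \<le> c * x" using l(1) c by simp
  then show ?thesis using that[of "Suc l"] l(2) by simp
qed

lemma u_count_le: "u_count c N l \<le> l"
proof -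
  have "u_count c N l \<le> card {1..l}" unfolding u_count_def by (rule card_mono) auto
  then show ?thesis by simp
qed

lemma u_count_unbounded:
  assumes c: "1 < c"
  shows "\<exists>l. \<beta> \<le> real (u_count c N l)"
proof -
  obtain i0 where i0: "sqrt (real N) < c ^ i0" using real_arch_pow[OF c] by blast
  have big: "sqrt (real N) < real_of_int \<lceil>c ^ i\<rceil>" if "i0 \<le> i" for i
    using power_increasing[OF that, of c] c i0 by linarith
  define l where "l = Suc i0 + nat \<lceil>\<beta>\<rceil>"
  have "{Suc i0..l} \<subseteq> {i \<in> {1..l}. sqrt (real N) < real_of_int \<lceil>c ^ i\<rceil>}"
    using big by auto
  then have "card {Suc i0..l} \<le> u_count c N l" unfolding u_count_def by (intro card_mono) auto
  moreover have "card {Suc i0..l} = nat \<lceil>\<beta>\<rceil> + 1" unfolding l_def by simp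
  ultimately show ?thesis by (intro exI[of _ l]) linarith
qed

lemma num_rounds_spec:
  assumes c: "1 < c"
  shows "ln \<tau> / ln (3/4) \<le> real (u_count c N (num_rounds c \<tau> N))"
  unfolding num_rounds_def by (rule LeastI_ex) (rule u_count_unbounded[OF c])

lemma num_rounds_ge:
  assumes c: "1 < c"
  shows "ln \<tau> / ln (3/4) \<le> real (num_rounds c \<tau> N)"
  using num_rounds_spec[OF c, of \<tau> N] u_count_le[of c N "num_rounds c \<tau> N"] by linarith

text \<open>For tau < 1 the loop only stops after some round with ceil(c^i) > sqrt N.\<close>
lemma num_rounds_covers:
  assumes c: "1 < c" and \<tau>: "0 < \<tau>" "\<tau> < 1" and l: "c ^ l + 1 \<le> sqrt (real N)"
  shows "l \<le> num_rounds c \<tau> N"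
proof (rule ccontr)
  assume "\<not> l \<le> num_rounds c \<tau> N"
  moreover have "0 < ln \<tau> / ln (3/4)" using \<tau> by (intro divide_neg_neg) auto
  then have "u_count c N (num_rounds c \<tau> N) \<noteq> 0" using num_rounds_spec[OF c, of \<tau> N] by linarith
  then obtain i where i: "i \<le> num_rounds c \<tau> N" "sqrt (real N) < real_of_int \<lceil>c ^ i\<rceil>"
    unfolding u_count_def by (metis (no_types, lifting) atLeastAtMost_iff card.empty empty_Collect_eq)
  ultimately have "c ^ i \<le> c ^ l" using c by (intro power_increasing) auto
  then have "\<lceil>c ^ i\<rceil> \<le> \<lceil>c ^ l\<rceil>" by (rule ceiling_mono)
  then show False using i(2) l by linarith
qed

lemma finite_qbasis_set: "finite (qbasis_set d :: ('n::finite) qbasis set)"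
proof -
  let ?V = "{p::int^'n. \<forall>i. p $ i \<in> tc_range d}"
  have "?V \<subseteq> vec_lambda ` (PiE UNIV (\<lambda>_. tc_range d))"
  proof
    fix p :: "int^'n" assume "p \<in> ?V"
    then have "vec_nth p \<in> PiE UNIV (\<lambda>_. tc_range d)" by auto
    then show "p \<in> vec_lambda ` (PiE UNIV (\<lambda>_. tc_range d))"
      by (metis image_eqI vec_nth_inverse)
  qed
  moreover have "finite (PiE (UNIV::'n set) (\<lambda>_. tc_range d))"
    by (rule finite_PiE) (auto simp: tc_range_def)
  ultimately have "finite ?V" by (meson finite_imageI finite_subset)
  moreover have "qbasis_set d \<subseteq> ?V \<times> tc_range d \<times> tc_range d" unfolding qbasis_set_def by auto
  ultimately show ?thesis by (simp add: finite_subset tc_range_def)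
qed

lemma zero_in_qbasis_set: "((0::int^'n::finite), (0::int), (0::int)) \<in> qbasis_set d"
  unfolding qbasis_set_def tc_range_def by simp

lemma supported_ket0: "supported_in (qbasis_set d) (ket0 :: ('n::finite) qstate)"
  unfolding supported_in_def ket0_def ket_def using zero_in_qbasis_set by auto

definition norm_sq_on :: "'b set \<Rightarrow> ('b \<Rightarrow> complex) \<Rightarrow> real" where
  "norm_sq_on B v = (\<Sum>b\<in>B. (cmod (v b))\<^sup>2)"

definition inner_on :: "'b set \<Rightarrow> ('b \<Rightarrow> complex) \<Rightarrow> ('b \<Rightarrow> complex) \<Rightarrow> complex" where
  "inner_on B u v = (\<Sum>b\<in>B. u b * cnj (v b))"

lemma norm_sq_on_lincomb:
  "norm_sq_on B (\<lambda>b. a * u b + v b) = (cmod a)\<^sup>2 * norm_sq_on B u + norm_sq_on B v + 2 * Re (a * inner_on B u v)"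
proof -
  have sq: "(cmod (z + w))\<^sup>2 = (cmod z)\<^sup>2 + (cmod w)\<^sup>2 + 2 * Re (z * cnj w)" for z w
    unfolding cmod_power2 by (simp add: algebra_simps power2_eq_square)
  show ?thesis
    unfolding norm_sq_on_def inner_on_def
    by (simp add: sq norm_mult power_mult_distrib mult.assoc sum.distrib sum_distrib_left Re_sum)
qed

lemma supported_lincomb:
  "supported_in B v \<Longrightarrow> supported_in B w \<Longrightarrow> supported_in B (\<lambda>b. a * v b + w b)"
  unfolding supported_in_def by auto

context
  fixes B and A Ainv :: "('b \<Rightarrow> complex) \<Rightarrow> 'b \<Rightarrow> complex"
  assumes U: "unitary_on B A Ainv"
begin

lemma unitary_on_norm_sq: "supported_in B v \<Longrightarrow> norm_sq_on B (A v) = norm_sq_on B v"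
  using U unfolding unitary_on_def norm_sq_on_def by blast

lemma unitary_on_lincomb:
  "supported_in B v \<Longrightarrow> supported_in B w \<Longrightarrow> A (\<lambda>b. a * v b + w b) = (\<lambda>b. a * A v b + A w b)"
  using U unfolding unitary_on_def by blast

lemma unitary_on_inverse:
  assumes "supported_in B v"
  shows "supported_in B (Ainv v)" "A (Ainv v) = v" "supported_in B (A v)"
  using U assms unfolding unitary_on_def by blast+

text \<open>Polarization: the norms of u + v and i u + v determine the inner product.\<close>
lemma unitary_on_inner:
  assumes u: "supported_in B u" and v: "supported_in B v"
  shows "inner_on B (A u) (A v) = inner_on B u v"
proof -
  have "Re (a * inner_on B (A u) (A v)) = Re (a * inner_on B u v)" for a
  proof -
    have "norm_sq_on B (A (\<lambda>b. a * u b + v b)) = norm_sq_on B (\<lambda>b. a * u b + v b)"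
      by (rule unitary_on_norm_sq[OF supported_lincomb[OF u v]])
    then have "norm_sq_on B (\<lambda>b. a * A u b + A v b) = norm_sq_on B (\<lambda>b. a * u b + v b)"
      by (simp only: unitary_on_lincomb[OF u v])
    then show ?thesis unfolding norm_sq_on_lincomb unitary_on_norm_sq[OF u] unitary_on_norm_sq[OF v] by simp
  qed
  from this[of 1] this[of "\<i>"] show ?thesis by (intro complex_eqI) simp_all
qed

end

lemma unitary_conj_S0:
  fixes A Ainv :: "('n::finite) qstate \<Rightarrow> 'n qstate"
  assumes U: "unitary_on (qbasis_set d) A Ainv" and v: "supported_in (qbasis_set d) v"
  shows "A (S0 (Ainv v)) = (\<lambda>b. v b - 2 * inner_on (qbasis_set d) v (A ket0) * A ket0 b)"
proof -
  let ?B = "qbasis_set d :: 'n qbasis set"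
  define w where "w = Ainv v"
  have w: "supported_in ?B w" "A w = v" unfolding w_def using unitary_on_inverse[OF U v] by auto
  have S0w: "S0 w = (\<lambda>b. (- 2 * w (0,0,0)) * ket0 b + w b)"
    unfolding S0_def ket0_def ket_def by auto
  have "inner_on ?B w ket0 = (\<Sum>b\<in>?B. if b = (0,0,0) then w (0,0,0) else 0)"
    unfolding inner_on_def ket0_def ket_def by (rule sum.cong) auto
  also have "\<dots> = w (0,0,0)"
    using zero_in_qbasis_set[where 'n='n, of d] by (simp add: finite_qbasis_set)
  finally have "w (0,0,0) = inner_on ?B v (A ket0)"
    using unitary_on_inner[OF U w(1) supported_ket0] w(2) by simp
  moreover have "A (S0 w) = (\<lambda>b. (- 2 * w (0,0,0)) * A ket0 b + A w b)"
    unfolding S0w by (rule unitary_on_lincomb[OF U supported_ket0 w(1)])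
  ultimately show ?thesis unfolding w_def[symmetric] using w(2) by (auto simp: algebra_simps)
qed

lemma fx_code_representable:
  assumes "representable d q r"
  shows "real_of_int (fx_code q r) = r * 2 ^ q"
proof -
  obtain c where "r = real_of_int c / 2 ^ q" using assms unfolding representable_def by blast
  then show ?thesis unfolding fx_code_def by simp
qed

locale qss_instance =
  fixes f :: "real^'n::finite \<Rightarrow> real" and xk :: "real^'n" and \<Delta> :: real
    and D :: "real^'p::finite^'n" and G :: "real^'n^'n" and zs :: "'p \<Rightarrow> int^'n"
    and xs :: "nat \<Rightarrow> real^'n" and N d q :: nat
    and A Ainv :: "'n qstate \<Rightarrow> 'n qstate"
  assumes hyps: "qss_hyps f xk \<Delta> D G zs xs N d q A Ainv"
begin

abbreviation n_good :: nat where "n_good \<equiv> improved_count f xk xs N"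
abbreviation psi :: "'n qstate" where "psi \<equiv> qss_state q f xk xs N"
abbreviation basis_of :: "real^'n \<Rightarrow> 'n qbasis" where "basis_of \<equiv> enc_basis q f xk"

definition search_basis :: "'n qbasis set" where "search_basis = (\<lambda>j. basis_of (xs j)) ` {..<N}"
definition good_basis :: "'n qbasis set" where "good_basis = {b \<in> search_basis. desired b}"
definition bad_basis :: "'n qbasis set" where "bad_basis = search_basis - good_basis"

definition amp_state :: "real \<Rightarrow> real \<Rightarrow> 'n qstate" where
  "amp_state a b = (\<lambda>x. if x \<in> good_basis then complex_of_real a
     else if x \<in> bad_basis then complex_of_real b else 0)"

lemma N_pos: "0 < N" and inj_xs: "inj_on xs {..<N}"
  and representable_xs: "\<And>j i. j < N \<Longrightarrow> representable d q (xs j $ i)"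
  and representable_f: "\<And>j. j < N \<Longrightarrow> representable d q (f (xs j))"
  and representable_neg_fk: "representable d q (- f xk)"
  and unitary: "unitary_on (qbasis_set d) A Ainv" and A_ket0: "A ket0 = psi"
  using hyps unfolding qss_hyps_def by auto

lemma inj_basis_of: "inj_on (\<lambda>j. basis_of (xs j)) {..<N}"
proof (rule inj_onI)
  fix j j' assume j: "j \<in> {..<N}" "j' \<in> {..<N}" and e: "basis_of (xs j) = basis_of (xs j')"
  have jN: "j < N" "j' < N" using j by auto
  have "xs j $ i = xs j' $ i" for i
  proof -
    from e have "fx_code q (xs j $ i) = fx_code q (xs j' $ i)"
      unfolding enc_basis_def by (metis (no_types, lifting) fst_conv vec_lambda_beta)
    then have "real_of_int (fx_code q (xs j $ i)) = real_of_int (fx_code q (xs j' $ i))" by simp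
    then have "xs j $ i * 2 ^ q = xs j' $ i * 2 ^ q"
      unfolding fx_code_representable[OF representable_xs[OF jN(1)]] fx_code_representable[OF representable_xs[OF jN(2)]] .
    then show ?thesis by simp
  qed
  then have "xs j = xs j'" by (simp add: vec_eq_iff)
  then show "j = j'" using inj_xs j by (auto dest: inj_onD)
qed

text \<open>All values are exactly representable, so the third register holds (f_j - f_k) 2^q exactly.\<close>
lemma desired_basis_of: "j < N \<Longrightarrow> desired (basis_of (xs j)) \<longleftrightarrow> f (xs j) < f xk"
proof -
  assume j: "j < N"
  have "real_of_int (fx_code q (- f xk) + fx_code q (f (xs j))) = (f (xs j) - f xk) * 2 ^ q"
    using fx_code_representable[OF representable_neg_fk] fx_code_representable[OF representable_f[OF j]]
    by (simp add: algebra_simps)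
  then have "fx_code q (- f xk) + fx_code q (f (xs j)) < 0 \<longleftrightarrow> (f (xs j) - f xk) * 2 ^ q < 0"
    by (metis of_int_less_0_iff)
  also have "\<dots> \<longleftrightarrow> f (xs j) < f xk" by (simp add: mult_less_0_iff)
  finally show ?thesis unfolding desired_def sign_bit_def enc_basis_def by simp
qed

lemma decode_basis_of: "j < N \<Longrightarrow> fx_decode_vec q (fst (basis_of (xs j))) = xs j"
  unfolding fx_decode_vec_def enc_basis_def by (simp add: vec_eq_iff fx_code_representable[OF representable_xs])

lemma finite_search_basis: "finite search_basis"
  unfolding search_basis_def by simp

lemma card_search_basis: "card search_basis = N"
  unfolding search_basis_def using card_image[OF inj_basis_of] by simp

lemma good_basis_eq: "good_basis = (\<lambda>j. basis_of (xs j)) ` {j \<in> {..<N}. f (xs j) < f xk}"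
  unfolding good_basis_def search_basis_def using desired_basis_of by auto

lemma card_good_basis: "card good_basis = n_good"
proof -
  have "inj_on (\<lambda>j. basis_of (xs j)) {j \<in> {..<N}. f (xs j) < f xk}"
    using inj_basis_of by (rule inj_on_subset) auto
  then show ?thesis unfolding good_basis_eq improved_count_def by (simp add: card_image)
qed

lemma good_subset_search: "good_basis \<subseteq> search_basis" unfolding good_basis_def by auto

lemma n_good_le: "n_good \<le> N"
  using card_mono[OF finite_search_basis good_subset_search] card_good_basis card_search_basis by simp

lemma card_bad_basis: "card bad_basis = N - n_good"
  unfolding bad_basis_def card_Diff_subset[OF finite_subset[OF good_subset_search finite_search_basis] good_subset_search]
  using card_good_basis card_search_basis by simp

lemma search_basis_split: "search_basis = good_basis \<union> bad_basis" "good_basis \<inter> bad_basis = {}"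
  unfolding bad_basis_def using good_subset_search by auto

lemma finite_good_basis: "finite good_basis" and finite_bad_basis: "finite bad_basis"
  using finite_search_basis search_basis_split by auto

lemma amp_state_outside: "x \<notin> search_basis \<Longrightarrow> amp_state a b x = 0"
  unfolding amp_state_def using search_basis_split by auto

lemma amp_state_good: "x \<in> good_basis \<Longrightarrow> amp_state a b x = complex_of_real a"
  unfolding amp_state_def by simp

lemma amp_state_bad: "x \<in> bad_basis \<Longrightarrow> amp_state a b x = complex_of_real b"
  unfolding amp_state_def using search_basis_split by auto

lemma psi_eq: "psi = amp_state (1 / sqrt (real N)) (1 / sqrt (real N))"
proof
  fix x
  let ?c = "complex_of_real (1 / sqrt (real N))"
  have "psi x = (\<Sum>j<N. ?c * ket (basis_of (xs j)) x)"
    unfolding qss_state_def by simp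
  also have "\<dots> = (\<Sum>e\<in>search_basis. if x = e then ?c else 0)"
    unfolding search_basis_def sum.reindex[OF inj_basis_of] by (rule sum.cong) (auto simp: ket_def)
  also have "\<dots> = amp_state (1 / sqrt (real N)) (1 / sqrt (real N)) x"
    using finite_search_basis search_basis_split unfolding amp_state_def by auto
  finally show "psi x = amp_state (1 / sqrt (real N)) (1 / sqrt (real N)) x" .
qed

lemma search_basis_subset: "search_basis \<subseteq> qbasis_set d"
proof
  fix x assume x: "x \<in> search_basis"
  have "supported_in (qbasis_set d) psi"
    using unitary_on_inverse(3)[OF unitary supported_ket0] A_ket0 by simp
  moreover have "psi x \<noteq> 0" using x N_pos search_basis_split unfolding psi_eq amp_state_def by auto
  ultimately show "x \<in> qbasis_set d" unfolding supported_in_def by blast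
qed

lemma supported_amp_state: "supported_in (qbasis_set d) (amp_state a b)"
  unfolding supported_in_def using amp_state_outside search_basis_subset by blast

lemma Schi_amp_state: "Schi (amp_state a b) = amp_state (- a) b"
  unfolding Schi_def amp_state_def good_basis_def bad_basis_def by (rule ext) auto

lemma inner_amp_state:
  "inner_on (qbasis_set d) (amp_state a b) (amp_state c c) =
     complex_of_real (c * (a * real n_good + b * (real N - real n_good)))"
proof -
  have "inner_on (qbasis_set d) (amp_state a b) (amp_state c c) =
      (\<Sum>x\<in>search_basis. amp_state a b x * cnj (amp_state c c x))"
    unfolding inner_on_def using search_basis_subset finite_qbasis_set
    by (intro sum.mono_neutral_right) (auto simp: amp_state_outside)
  also have "\<dots> = (\<Sum>x\<in>good_basis. complex_of_real (a * c)) + (\<Sum>x\<in>bad_basis. complex_of_real (b * c))"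
    unfolding search_basis_split(1) using finite_good_basis finite_bad_basis search_basis_split(2)
    by (simp add: sum.union_disjoint amp_state_good amp_state_bad cong: sum.cong)
  finally show ?thesis using card_good_basis card_bad_basis n_good_le by (simp add: of_nat_diff algebra_simps)
qed

definition flipped_mean :: "real \<Rightarrow> real \<Rightarrow> real" where
  "flipped_mean a b = (b * (real N - real n_good) - a * real n_good) / real N"

text \<open>Q is Grover's inversion about the mean of the amplitudes after S_chi has flipped the good ones.\<close>
lemma Qop_amp_state:
  "Qop A Ainv (amp_state a b) = amp_state (a + 2 * flipped_mean a b) (2 * flipped_mean a b - b)"
proof
  fix x
  let ?c = "1 / sqrt (real N)"
  define E where "E = ?c * (- a * real n_good + b * (real N - real n_good))"
  have "2 * E * ?c = 2 * flipped_mean a b"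
    unfolding flipped_mean_def E_def using N_pos by (simp add: field_simps)
  then have ec: "2 * complex_of_real E * complex_of_real ?c = complex_of_real (2 * flipped_mean a b)"
    by (metis of_real_mult of_real_numeral)
  have "Qop A Ainv (amp_state a b) x = - (amp_state (-a) b x - 2 * complex_of_real E * amp_state ?c ?c x)"
    unfolding Qop_def Schi_amp_state unitary_conj_S0[OF unitary supported_amp_state] A_ket0 E_def
    by (simp add: psi_eq inner_amp_state)
  also have "\<dots> = amp_state (a + 2 * flipped_mean a b) (2 * flipped_mean a b - b) x"
    using search_basis_split(1) ec
    by (cases "x \<in> good_basis"; cases "x \<in> bad_basis") (auto simp: amp_state_good amp_state_bad amp_state_outside)
  finally show "Qop A Ainv (amp_state a b) x = amp_state (a + 2 * flipped_mean a b) (2 * flipped_mean a b - b) x" .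
qed

definition grover_step :: "real \<times> real \<Rightarrow> real \<times> real" where
  "grover_step = (\<lambda>(a, b). (a + 2 * flipped_mean a b, 2 * flipped_mean a b - b))"

definition grover_amp :: "nat \<Rightarrow> real \<times> real" where
  "grover_amp j = (grover_step ^^ j) (1 / sqrt (real N), 1 / sqrt (real N))"

definition success_prob :: "nat \<Rightarrow> real" where
  "success_prob j = (fst (grover_amp j))\<^sup>2 * real n_good"

lemma Qop_power_psi: "(Qop A Ainv ^^ j) psi = amp_state (fst (grover_amp j)) (snd (grover_amp j))"
proof (induction j)
  case 0 then show ?case unfolding grover_amp_def by (simp add: psi_eq)
next
  case (Suc j)
  then show ?case unfolding grover_amp_def by (simp add: Qop_amp_state grover_step_def split_def)
qed

lemma grover_amp_normalized:
  "(fst (grover_amp j))\<^sup>2 * real n_good + (snd (grover_amp j))\<^sup>2 * (real N - real n_good) = 1"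
proof (induction j)
  case 0
  then show ?case unfolding grover_amp_def using N_pos by (simp add: power_divide field_simps)
next
  case (Suc j)
  obtain a b where ab: "grover_amp j = (a, b)" by fastforce
  define m where "m = flipped_mean a b"
  have "m * real N - (b * (real N - real n_good) - a * real n_good) = 0"
    unfolding m_def flipped_mean_def using N_pos by simp
  moreover have "(a + 2 * m)\<^sup>2 * t + (2 * m - b)\<^sup>2 * (M - t) - (a\<^sup>2 * t + b\<^sup>2 * (M - t)) =
      4 * m * (m * M - (b * (M - t) - a * t))" for t M :: real
    by (simp add: algebra_simps power2_eq_square)
  ultimately have "(a + 2 * m)\<^sup>2 * real n_good + (2 * m - b)\<^sup>2 * (real N - real n_good) =
      a\<^sup>2 * real n_good + b\<^sup>2 * (real N - real n_good)"
    by (metis eq_iff_diff_eq_0 mult_zero_right)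
  moreover have "grover_amp (Suc j) = (a + 2 * m, 2 * m - b)"
    using ab unfolding grover_amp_def m_def by (simp add: grover_step_def)
  ultimately show ?case using Suc ab by simp
qed

lemma success_prob_bounds: "0 \<le> success_prob j \<and> success_prob j \<le> 1"
proof -
  have "0 \<le> (snd (grover_amp j))\<^sup>2 * (real N - real n_good)" using n_good_le by simp
  then show ?thesis using grover_amp_normalized[of j] unfolding success_prob_def by simp
qed

lemma success_prob_0: "success_prob 0 = real n_good / real N"
  unfolding success_prob_def grover_amp_def using N_pos by (simp add: power_divide)

lemma sum_sq_amp_state_good: "(\<Sum>x\<in>good_basis. (cmod (amp_state a b x))\<^sup>2) = a\<^sup>2 * real n_good"
  using card_good_basis by (simp add: amp_state_good)

lemma sum_sq_amp_state_bad: "(\<Sum>x\<in>bad_basis. (cmod (amp_state a b x))\<^sup>2) = b\<^sup>2 * (real N - real n_good)"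
  using card_bad_basis n_good_le by (simp add: amp_state_bad of_nat_diff)

context
  fixes a b :: real
  assumes normalized: "a\<^sup>2 * real n_good + b\<^sup>2 * (real N - real n_good) = 1"
begin

lemma nn_integral_amp_state_sq: "(\<integral>\<^sup>+x. ennreal ((cmod (amp_state a b x))\<^sup>2) \<partial>count_space UNIV) = 1"
proof -
  have "(\<integral>\<^sup>+x. ennreal ((cmod (amp_state a b x))\<^sup>2) \<partial>count_space UNIV) =
      ennreal (\<Sum>x\<in>search_basis. (cmod (amp_state a b x))\<^sup>2)"
    by (subst nn_integral_count_space') (auto simp: finite_search_basis amp_state_outside)
  also have "(\<Sum>x\<in>search_basis. (cmod (amp_state a b x))\<^sup>2) = 1"
    unfolding search_basis_split(1) using finite_good_basis finite_bad_basis search_basis_split(2) normalized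
    by (simp add: sum.union_disjoint sum_sq_amp_state_good sum_sq_amp_state_bad)
  finally show ?thesis by simp
qed

lemma pmf_measure_amp_state: "pmf (measure_basis (amp_state a b)) x = (cmod (amp_state a b x))\<^sup>2"
  unfolding measure_basis_def by (rule pmf_embed_pmf) (simp_all add: nn_integral_amp_state_sq)

lemma set_measure_amp_state: "set_pmf (measure_basis (amp_state a b)) \<subseteq> search_basis"
proof
  fix x assume "x \<in> set_pmf (measure_basis (amp_state a b))"
  then have "amp_state a b x \<noteq> 0" by (simp add: set_pmf_eq pmf_measure_amp_state)
  then show "x \<in> search_basis" using amp_state_outside by blast
qed

lemma desired_measure_amp_state:
  "map_pmf desired (measure_basis (amp_state a b)) = bernoulli_pmf (a\<^sup>2 * real n_good)"
proof -
  let ?M = "measure_basis (amp_state a b)"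
  have meas: "measure ?M X = (\<Sum>x\<in>X \<inter> search_basis. (cmod (amp_state a b x))\<^sup>2)" for X
  proof -
    have "measure ?M X = measure ?M (X \<inter> set_pmf ?M)" by (simp add: measure_Int_set_pmf)
    also have "X \<inter> set_pmf ?M = (X \<inter> search_basis) \<inter> set_pmf ?M" using set_measure_amp_state by blast
    also have "measure ?M \<dots> = (\<Sum>x\<in>X \<inter> search_basis. pmf ?M x)"
      using finite_search_basis by (simp add: measure_Int_set_pmf measure_measure_pmf_finite)
    finally show ?thesis by (simp add: pmf_measure_amp_state)
  qed
  have good: "desired -` {True} \<inter> search_basis = good_basis" unfolding good_basis_def by auto
  have bad: "desired -` {False} \<inter> search_basis = bad_basis" unfolding bad_basis_def good_basis_def by auto
  have "0 \<le> b\<^sup>2 * (real N - real n_good)" using n_good_le by simp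
  then have p: "0 \<le> a\<^sup>2 * real n_good" "a\<^sup>2 * real n_good \<le> 1" using normalized by simp_all
  show ?thesis
  proof (rule pmf_eqI)
    fix i :: bool
    show "pmf (map_pmf desired ?M) i = pmf (bernoulli_pmf (a\<^sup>2 * real n_good)) i"
    proof (cases i)
      case True
      then show ?thesis unfolding pmf_map meas using good p sum_sq_amp_state_good by simp
    next
      case False
      then show ?thesis unfolding pmf_map meas using bad p normalized sum_sq_amp_state_bad by simp
    qed
  qed
qed

end

lemma desired_measure_Qop_power:
  "map_pmf desired (measure_basis ((Qop A Ainv ^^ j) psi)) = bernoulli_pmf (success_prob j)"
  unfolding Qop_power_psi success_prob_def using desired_measure_amp_state[OF grover_amp_normalized] .

lemma set_measure_Qop_power: "set_pmf (measure_basis ((Qop A Ainv ^^ j) psi)) \<subseteq> search_basis"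
  unfolding Qop_power_psi using set_measure_amp_state[OF grover_amp_normalized] .

definition theta :: real where "theta = arcsin (sqrt (real n_good / real N))"

lemma good_fraction_bounds: "0 \<le> real n_good / real N" "real n_good / real N \<le> 1"
  using n_good_le N_pos by auto

lemma sin_theta: "sin theta = sqrt (real n_good / real N)"
proof -
  have "0 \<le> sqrt (real n_good / real N)" "sqrt (real n_good / real N) \<le> 1"
    using good_fraction_bounds by simp_all
  then show ?thesis unfolding theta_def by (intro sin_arcsin) linarith+
qed

lemma cos_theta: "cos theta = sqrt (1 - real n_good / real N)"
proof -
  have "0 \<le> sqrt (real n_good / real N)" "sqrt (real n_good / real N) \<le> 1"
    using good_fraction_bounds by simp_all
  then show ?thesis
    unfolding theta_def using good_fraction_bounds by (subst cos_arcsin) (linarith, linarith, simp)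
qed

lemma success_prob_eq_grover:
  assumes t: "1 \<le> n_good" "n_good < N"
  shows "success_prob = grover_success theta"
proof -
  define \<sigma> where "\<sigma> = sqrt (real n_good)"
  define \<kappa> where "\<kappa> = sqrt (real N - real n_good)"
  define \<nu> where "\<nu> = sqrt (real N)"
  have pos: "\<sigma> > 0" "\<kappa> > 0" "\<nu> > 0" unfolding \<sigma>_def \<kappa>_def \<nu>_def using t by auto
  have sq: "\<sigma>\<^sup>2 = real n_good" "\<kappa>\<^sup>2 = real N - real n_good" "\<nu>\<^sup>2 = real N"
    unfolding \<sigma>_def \<kappa>_def \<nu>_def using t by auto
  have st: "sin theta = \<sigma> / \<nu>" unfolding sin_theta \<sigma>_def \<nu>_def by (simp add: real_sqrt_divide)
  have "1 - real n_good / real N = (real N - real n_good) / real N" using N_pos by (simp add: field_simps)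
  then have ct: "cos theta = \<kappa> / \<nu>" unfolding cos_theta \<kappa>_def \<nu>_def by (simp add: real_sqrt_divide)
  note rot = grover_rotation[OF pos, of theta, unfolded sq, OF _ st ct]
  have amp: "grover_amp j = (sin ((2 * real j + 1) * theta) / \<sigma>, cos ((2 * real j + 1) * theta) / \<kappa>)" for j
  proof (induction j)
    case 0
    show ?case unfolding grover_amp_def using st ct pos \<nu>_def by simp
  next
    case (Suc j)
    have e: "(2 * real (Suc j) + 1) * theta = (2 * real j + 1) * theta + 2 * theta" by (simp add: algebra_simps)
    have "grover_amp (Suc j) = grover_step (grover_amp j)" unfolding grover_amp_def by simp
    then show ?case
      unfolding Suc e grover_step_def flipped_mean_def
      using rot[of "(2 * real j + 1) * theta"] by (simp add: sq)
  qed
  show ?thesis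
    by (rule ext) (simp add: success_prob_def grover_success_def amp sq(1)[symmetric] power_divide pos(1)[THEN less_imp_neq, symmetric])
qed

lemma sin_two_theta_pos:
  assumes t: "1 \<le> n_good" "n_good < N"
  shows "0 < sin (2 * theta)"
  unfolding sin_double sin_theta cos_theta using t by simp

text \<open>Only whether each measurement hits a good basis state matters for the cost and for
  failure, and after j applications of Q this has probability success_prob j.\<close>
lemma found_and_cost_qsearch_rounds:
  "map_pmf found_and_cost (qsearch_rounds A Ainv psi Ms) = outcome_rounds success_prob Ms"
proof (induction Ms)
  case Nil
  then show ?case by (simp add: found_and_cost_def)
next
  case (Cons M Ms)
  define g where "g = (\<lambda>k s. if s then return_pmf (True, k)
     else map_pmf (\<lambda>x. (fst x, k + snd x)) (outcome_rounds success_prob Ms))"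
  have "map_pmf found_and_cost (qsearch_rounds A Ainv psi (M # Ms)) =
      qsearch_round A Ainv psi M \<bind> (\<lambda>x. g (snd x) (desired (fst x)))"
    unfolding qsearch_rounds.simps map_bind_pmf
  proof (intro bind_pmf_cong refl)
    fix x :: "'n qbasis \<times> nat"
    obtain b k where x: "x = (b, k)" by (cases x)
    have "map_pmf found_and_cost (qsearch_rounds A Ainv psi Ms \<bind> (\<lambda>(r, k'). return_pmf (r, k + k')))
        = map_pmf (\<lambda>x. (fst x, k + snd x)) (map_pmf found_and_cost (qsearch_rounds A Ainv psi Ms))"
      by (simp add: map_pmf_def bind_assoc_pmf bind_return_pmf split_def found_and_cost_def)
    then show "map_pmf found_and_cost ((\<lambda>(b, k). if desired b then return_pmf (Some b, k)
          else qsearch_rounds A Ainv psi Ms \<bind> (\<lambda>(r, k'). return_pmf (r, k + k'))) x) = g (snd x) (desired (fst x))"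
      unfolding x g_def using Cons.IH by (simp add: found_and_cost_def)
  qed
  also have "\<dots> = pmf_of_set {1..M} \<bind> (\<lambda>j. map_pmf desired (measure_basis ((Qop A Ainv ^^ j) psi)) \<bind> g (1 + 2 * j))"
    unfolding qsearch_round_def by (simp add: bind_assoc_pmf bind_return_pmf bind_map_pmf)
  also have "\<dots> = outcome_rounds success_prob (M # Ms)"
    unfolding desired_measure_Qop_power g_def by simp
  finally show ?case .
qed

lemma found_and_cost_modified_qsearch:
  "map_pmf found_and_cost (modified_qsearch c \<tau> N A Ainv psi) = outcome_search success_prob (round_params c \<tau> N)"
proof -
  define g where "g = (\<lambda>s. if s then return_pmf (True, 1)
     else map_pmf (\<lambda>x. (fst x, 1 + snd x)) (outcome_rounds success_prob (round_params c \<tau> N)))"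
  have "map_pmf found_and_cost (modified_qsearch c \<tau> N A Ainv psi) = measure_basis psi \<bind> (\<lambda>b. g (desired b))"
    unfolding modified_qsearch_def map_bind_pmf
  proof (intro bind_pmf_cong refl)
    fix b :: "'n qbasis"
    have "map_pmf found_and_cost (qsearch_rounds A Ainv psi (round_params c \<tau> N) \<bind> (\<lambda>(r, k). return_pmf (r, 1 + k)))
        = map_pmf (\<lambda>x. (fst x, 1 + snd x)) (map_pmf found_and_cost (qsearch_rounds A Ainv psi (round_params c \<tau> N)))"
      by (simp add: map_pmf_def bind_assoc_pmf bind_return_pmf split_def found_and_cost_def)
    then show "map_pmf found_and_cost (if desired b then return_pmf (Some b, 1)
        else qsearch_rounds A Ainv psi (round_params c \<tau> N) \<bind> (\<lambda>(r, k). return_pmf (r, 1 + k))) = g (desired b)"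
      unfolding g_def using found_and_cost_qsearch_rounds by (simp add: found_and_cost_def)
  qed
  also have "\<dots> = map_pmf desired (measure_basis ((Qop A Ainv ^^ 0) psi)) \<bind> g"
    by (simp add: bind_map_pmf)
  also have "\<dots> = outcome_search success_prob (round_params c \<tau> N)"
    unfolding desired_measure_Qop_power g_def outcome_search_def by simp
  finally show ?thesis .
qed

lemma qsearch_rounds_found_good:
  "x \<in> set_pmf (qsearch_rounds A Ainv psi Ms) \<Longrightarrow> fst x = Some b \<Longrightarrow> b \<in> good_basis"
proof (induction Ms arbitrary: x)
  case Nil then show ?case by simp
next
  case (Cons M Ms)
  obtain b0 k0 where y: "(b0, k0) \<in> set_pmf (qsearch_round A Ainv psi M)"
    and x: "x \<in> set_pmf (if desired b0 then return_pmf (Some b0, k0)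
          else qsearch_rounds A Ainv psi Ms \<bind> (\<lambda>(r, k'). return_pmf (r, k0 + k')))"
    using Cons.prems(1) by auto
  have "b0 \<in> search_basis"
    using y set_measure_Qop_power unfolding qsearch_round_def by auto
  then show ?case
    using x Cons.prems(2) Cons.IH unfolding good_basis_def by (cases "desired b0") auto
qed

lemma modified_qsearch_found_good:
  assumes x: "x \<in> set_pmf (modified_qsearch c \<tau> N A Ainv psi)" and b: "fst x = Some b"
  shows "b \<in> good_basis"
proof -
  obtain b0 where b0: "b0 \<in> set_pmf (measure_basis psi)"
    and x': "x \<in> set_pmf (if desired b0 then return_pmf (Some b0, 1)
       else qsearch_rounds A Ainv psi (round_params c \<tau> N) \<bind> (\<lambda>(r, k). return_pmf (r, 1 + k)))"
    using x unfolding modified_qsearch_def by auto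
  show ?thesis
  proof (cases "desired b0")
    case True
    then show ?thesis using x' b b0 set_measure_Qop_power[of 0] unfolding good_basis_def by auto
  next
    case False
    then obtain y where "y \<in> set_pmf (qsearch_rounds A Ainv psi (round_params c \<tau> N))" "fst y = fst x"
      using x' by auto
    then show ?thesis using qsearch_rounds_found_good b by simp
  qed
qed

lemma quantum_search_step_found_improved:
  assumes "(r, k) \<in> set_pmf (quantum_search_step c \<tau> d q f xk xs N A Ainv)" and "r = Some x"
  shows "x \<in> xs ` {..<N} \<and> f x < f xk"
proof -
  obtain r0 k0 where y: "(r0, k0) \<in> set_pmf (modified_qsearch c \<tau> N A Ainv psi)"
    and r: "r = map_option (\<lambda>b. fx_decode_vec q (fst b)) r0"
    using assms(1) unfolding quantum_search_step_def by auto
  obtain b where b: "r0 = Some b" using assms(2) r by (cases r0) simp_all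
  then have x: "x = fx_decode_vec q (fst b)" using r assms(2) by simp
  have "b \<in> good_basis" using modified_qsearch_found_good[OF y] b by simp
  then obtain j where "j < N" "f (xs j) < f xk" "b = basis_of (xs j)" unfolding good_basis_eq by auto
  then show ?thesis using x decode_basis_of by auto
qed

lemma expected_calls_quantum_search_step:
  assumes "1 \<le> c"
  shows "measure_pmf.expectation (quantum_search_step c \<tau> d q f xk xs N A Ainv) (\<lambda>(r, k). real k)
     = 1 + (1 - real n_good / real N) * expected_cost success_prob (round_params c \<tau> N)"
proof -
  have "measure_pmf.expectation (quantum_search_step c \<tau> d q f xk xs N A Ainv) (\<lambda>(r, k). real k)
      = measure_pmf.expectation (map_pmf found_and_cost (modified_qsearch c \<tau> N A Ainv psi)) (\<lambda>x. real (snd x))"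
    unfolding quantum_search_step_def by (simp add: split_def found_and_cost_def)
  then show ?thesis
    unfolding found_and_cost_modified_qsearch
    using expected_calls_outcome_search[OF round_params_pos[OF assms] success_prob_bounds] success_prob_0 by simp
qed

lemma failure_prob_quantum_search_step:
  assumes "1 \<le> c"
  shows "measure_pmf.prob (quantum_search_step c \<tau> d q f xk xs N A Ainv) {p. fst p = None}
     = (1 - real n_good / real N) * failure_prob success_prob (round_params c \<tau> N)"
proof -
  have "measure_pmf.prob (quantum_search_step c \<tau> d q f xk xs N A Ainv) {p. fst p = None}
      = measure_pmf.prob (map_pmf found_and_cost (modified_qsearch c \<tau> N A Ainv psi)) {x. \<not> fst x}"
    unfolding quantum_search_step_def measure_map_pmf
    by (intro arg_cong[where f = "measure_pmf.prob _"] set_eqI) (simp add: found_and_cost_def split_beta del: not_None_eq)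
  then show ?thesis
    unfolding found_and_cost_modified_qsearch
    using failure_outcome_search[OF round_params_pos[OF assms] success_prob_bounds] success_prob_0 by simp
qed

end

section \<open>Bounds on the number of oracle calls\<close>

definition upper_const :: "real \<Rightarrow> real" where
  "upper_const c = 1 + 2 * c * (16 / (2 - c) + 4 / (c - 1)) / (2 - c)"

definition lower_const :: "real \<Rightarrow> real" where
  "lower_const c = 3 * (c - 1) / (64 * c)"

context qss_instance
begin

lemma late_rounds_fail_rarely:
  assumes c: "1 < c" "c < 2" and t: "1 \<le> n_good" "n_good < N"
  obtains L where "\<And>i. L \<le> i \<Longrightarrow> 1 - avg_success success_prob (round_size c i) \<le> (c + 2) / (4 * c)"
    and "c ^ max 1 L \<le> c * (1 + 2 * c / ((2 - c) * sin (2 * theta)))"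
proof -
  define X where "X = 2 * c / ((2 - c) * sin (2 * theta))"
  have X0: "0 < X" unfolding X_def using c sin_two_theta_pos[OF t] by simp
  obtain L where L: "X \<le> c ^ L" "c ^ L \<le> max 1 (c * X)" using power_cover[OF c(1)] by blast
  have "1 - avg_success success_prob (round_size c i) \<le> (c + 2) / (4 * c)" if "L \<le> i" for i
  proof -
    have "X \<le> real (round_size c i)"
      using L(1) power_increasing[OF that, of c] c round_size_ge[of c i] by linarith
    then show ?thesis unfolding success_prob_eq_grover[OF t] X_def
      by (rule avg_grover_failure_le_threshold[OF c sin_two_theta_pos[OF t]])
  qed
  moreover have "c ^ max 1 L \<le> c * (1 + X)"
  proof (cases "L = 0")
    case False
    have "0 < c * X" using c X0 by simp
    then have "max 1 (c * X) \<le> c * (1 + X)" using c by (simp add: distrib_left max_def)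
    then show ?thesis using order_trans[OF L(2)] False by simp
  qed (use X0 c in simp)
  ultimately show ?thesis using that unfolding X_def by blast
qed

lemma expected_cost_le:
  assumes c: "1 < c" "c < 2" and t: "1 \<le> n_good" "n_good < N"
  shows "expected_cost success_prob (round_params c \<tau> N)
    \<le> (16 / (2 - c) + 4 / (c - 1)) * c * (1 + 2 * c / ((2 - c) * sin (2 * theta)))"
proof -
  obtain L where fail: "\<And>i. L \<le> i \<Longrightarrow> 1 - avg_success success_prob (round_size c i) \<le> (c + 2) / (4 * c)"
    and cL: "c ^ max 1 L \<le> c * (1 + 2 * c / ((2 - c) * sin (2 * theta)))"
    using late_rounds_fail_rarely[OF c t] by blast
  have "expected_cost success_prob (round_params c \<tau> N) \<le> (16 / (2 - c) + 4 / (c - 1)) * c ^ max 1 L"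
    unfolding round_params_eq by (rule expected_cost_schedule_le[OF c success_prob_bounds fail])
  also have "\<dots> \<le> (16 / (2 - c) + 4 / (c - 1)) * (c * (1 + 2 * c / ((2 - c) * sin (2 * theta))))"
    using cL c by (intro mult_left_mono) (auto intro!: add_pos_pos less_imp_le)
  finally show ?thesis by (simp add: mult.assoc)
qed

lemma expected_cost_upper:
  assumes c: "1 < c" "c < 2" and t: "1 \<le> n_good"
  shows "1 + (1 - real n_good / real N) * expected_cost success_prob (round_params c \<tau> N)
    \<le> upper_const c * sqrt (real N / real n_good)"
proof (cases "n_good = N")
  case True
  have "1 \<le> upper_const c" unfolding upper_const_def using c by simp
  then show ?thesis using True N_pos by simp
next
  case False
  then have tN: "n_good < N" using n_good_le by simp
  define s where "s = sin theta"
  define co where "co = cos theta"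
  define K where "K = 2 * c / (2 - c)"
  define Z where "Z = 16 / (2 - c) + 4 / (c - 1)"
  define E where "E = expected_cost success_prob (round_params c \<tau> N)"
  have s: "0 < s" "s \<le> 1" and co: "0 < co" "co \<le> 1"
    unfolding s_def co_def sin_theta cos_theta using t tN by auto
  have co2: "1 - real n_good / real N = co\<^sup>2" unfolding co_def cos_theta using good_fraction_bounds by simp
  have K0: "0 < K" and Z0: "0 < Z" unfolding K_def Z_def using c by (auto intro!: add_pos_pos)
  have "2 * c / ((2 - c) * sin (2 * theta)) = K / (2 * s * co)"
    unfolding K_def s_def co_def sin_double by (simp only: divide_divide_eq_left)
  then have "co\<^sup>2 * E \<le> co\<^sup>2 * (Z * c * (1 + K / (2 * s * co)))"
    using expected_cost_le[OF c t tN] unfolding E_def Z_def by (simp add: mult_left_mono)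
  also have "\<dots> = Z * c * (co\<^sup>2 + co * K / (2 * s))"
    using co s by (simp add: field_simps power2_eq_square)
  also have "\<dots> \<le> Z * c * (1 + K / (2 * s))"
  proof -
    have "co * K / (2 * s) \<le> K / (2 * s)" using co s K0 by (simp add: divide_right_mono mult_left_le_one_le)
    moreover have "co\<^sup>2 \<le> 1" using co by (simp add: power_le_one)
    ultimately show ?thesis using Z0 c by (intro mult_left_mono) auto
  qed
  also have "\<dots> \<le> Z * c * ((1 + K / 2) / s)"
  proof -
    have "1 + K / (2 * s) \<le> (1 + K / 2) / s" using s by (simp add: add_divide_distrib)
    then show ?thesis using Z0 c by (intro mult_left_mono) auto
  qed
  moreover have "1 \<le> 1 / s" using s by simp
  ultimately have "1 + co\<^sup>2 * E \<le> 1 / s + Z * c * ((1 + K / 2) / s)" by linarith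
  also have "\<dots> = (1 + Z * c * (1 + K / 2)) * (1 / s)" using s by (simp add: field_simps)
  also have "1 + Z * c * (1 + K / 2) = upper_const c"
  proof -
    have "1 + K / 2 = 2 / (2 - c)" unfolding K_def using c by (simp add: field_simps)
    then show ?thesis unfolding upper_const_def Z_def[symmetric] by (simp add: algebra_simps)
  qed
  also have "1 / s = sqrt (real N / real n_good)" unfolding s_def sin_theta by (simp add: real_sqrt_divide)
  finally show ?thesis unfolding co2 E_def .
qed

text \<open>Before M reaches order 1 / sin theta the rounds succeed with total probability at most 1/2,
  so with probability 1/2 the search pays for the round with c^l of that order.\<close>
lemma expected_cost_ge_half_power:
  assumes c: "1 < c" "c < 2" and t: "1 \<le> n_good" "n_good < N"
    and l: "1 \<le> l" "l \<le> num_rounds c \<tau> N" and small: "c ^ l * sin theta \<le> (c - 1) / 8"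
  shows "c ^ l / 2 \<le> expected_cost success_prob (round_params c \<tau> N)"
proof -
  define S where "S = (\<Sum>i\<in>{1..<l}. avg_success success_prob (round_size c i))"
  have reach: "(1 - S) * real (round_size c l) \<le> expected_cost success_prob (round_params c \<tau> N)"
    unfolding S_def round_params_eq
    by (rule expected_cost_ge_reached_round[OF success_prob_bounds]) (use l in auto)
  have c2: "0 < c\<^sup>2 - 1" using c by (simp add: power_less_one_iff one_less_power)
  have "S \<le> 25 * (c ^ l * sin theta)\<^sup>2 / (c\<^sup>2 - 1)"
    unfolding S_def success_prob_eq_grover[OF t] by (rule sum_avg_grover_success_le[OF c(1)])
  also have "\<dots> \<le> 25 * ((c - 1) / 8)\<^sup>2 / (c\<^sup>2 - 1)"
  proof -
    have "0 \<le> c ^ l * sin theta" unfolding sin_theta using c by simp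
    then show ?thesis using small c2 by (intro divide_right_mono mult_left_mono power_mono) auto
  qed
  also have "\<dots> \<le> 1/2"
  proof -
    have "(c - 1) * (c - 1) \<le> (c - 1) * (c + 1)" using c by (intro mult_left_mono) auto
    then have "(c - 1)\<^sup>2 \<le> c\<^sup>2 - 1" by (simp add: power2_eq_square algebra_simps)
    then have "25 * ((c - 1) / 8)\<^sup>2 \<le> 1/2 * (c\<^sup>2 - 1)" unfolding power_divide using c2 by simp
    then show ?thesis using c2 by (simp add: pos_divide_le_eq)
  qed
  finally have "1/2 \<le> 1 - S" by simp
  then have "1/2 * real (round_size c l) \<le> (1 - S) * real (round_size c l)"
    by (rule mult_right_mono) simp
  then have "c ^ l / 2 \<le> (1 - S) * real (round_size c l)"
    using round_size_ge[of c l] by linarith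
  with reach show ?thesis by linarith
qed

lemma good_fraction_le_quarter:
  assumes "sin theta \<le> 1/2"
  shows "real n_good / real N \<le> 1/4"
proof -
  have "(sin theta)\<^sup>2 \<le> (1/2)\<^sup>2"
    using assms by (intro power_mono) (simp_all add: sin_theta)
  then show ?thesis unfolding sin_theta using good_fraction_bounds by (simp add: power2_eq_square)
qed

text \<open>Since 1 / sin theta = sqrt (N / t) \<le> sqrt N, the loop does not stop before c^l reaches
  the order of 1 / sin theta.\<close>
lemma round_at_scale:
  assumes c: "1 < c" "c < 2" and t: "1 \<le> n_good" and \<tau>: "0 < \<tau>" "\<tau> < 1"
    and few: "sin theta \<le> 1/2" "c * sin theta \<le> (c - 1) / 8"
  obtains l where "1 \<le> l" "l \<le> num_rounds c \<tau> N"
    "c ^ l * sin theta \<le> (c - 1) / 8" "(c - 1) / 8 < c ^ Suc l * sin theta"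
proof -
  define s where "s = sin theta"
  define \<delta> where "\<delta> = (c - 1) / 8"
  have s: "0 < s" unfolding s_def using t N_pos by (simp add: sin_theta)
  have \<delta>: "0 < \<delta>" "\<delta> \<le> 1/8" unfolding \<delta>_def using c by auto
  have few': "c * s \<le> \<delta>" using few(2) unfolding s_def \<delta>_def .
  have N4: "4 \<le> real N" using good_fraction_le_quarter[OF few(1)] t N_pos by (simp add: field_simps)
  have "s \<le> c * s" using s c by simp
  then have "s \<le> \<delta>" using few' by linarith
  then have "1 \<le> \<delta> / s" using s by simp
  then obtain l where l: "c ^ l \<le> \<delta> / s" "\<delta> / s < c ^ Suc l" by (rule power_bracket[OF c(1)])
  have l1: "1 \<le> l"
  proof (rule ccontr)
    assume "\<not> 1 \<le> l"
    then have "l = 0" by simp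
    then have "\<delta> < c * s" using l(2) s by (simp add: field_simps)
    then show False using few' by simp
  qed
  have "c ^ l \<le> \<delta> * sqrt (real N)"
  proof -
    have "\<delta> / s = \<delta> * sqrt (real N / real n_good)" unfolding s_def sin_theta by (simp add: real_sqrt_divide)
    also have "\<dots> \<le> \<delta> * sqrt (real N)"
    proof -
      have "real N / real n_good \<le> real N" using t by (simp add: divide_le_eq mult_le_cancel_left1)
      then show ?thesis using \<delta> by (intro mult_left_mono real_sqrt_le_mono) auto
    qed
    finally show ?thesis using l(1) by simp
  qed
  moreover have "2 \<le> sqrt (real N)" using real_sqrt_le_mono[OF N4] by simp
  moreover have "\<delta> * sqrt (real N) \<le> 1/8 * sqrt (real N)" using \<delta> by (intro mult_right_mono) auto
  ultimately have "c ^ l + 1 \<le> sqrt (real N)" by linarith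
  then have "l \<le> num_rounds c \<tau> N" by (rule num_rounds_covers[OF c(1) \<tau>])
  moreover have "c ^ l * s \<le> \<delta>" "\<delta> < c ^ Suc l * s" using l s by (simp_all add: field_simps)
  ultimately show ?thesis using that l1 unfolding s_def \<delta>_def by blast
qed

lemma expected_cost_lower_few_good:
  assumes c: "1 < c" "c < 2" and t: "1 \<le> n_good" and \<tau>: "0 < \<tau>" "\<tau> < 1"
    and few: "sin theta \<le> 1/2" "c * sin theta \<le> (c - 1) / 8"
  shows "lower_const c / sin theta < (1 - real n_good / real N) * expected_cost success_prob (round_params c \<tau> N)"
proof -
  obtain l where l: "1 \<le> l" "l \<le> num_rounds c \<tau> N"
    and scale: "c ^ l * sin theta \<le> (c - 1) / 8" "(c - 1) / 8 < c ^ Suc l * sin theta"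
    by (rule round_at_scale[OF c t \<tau> few])
  have s: "0 < sin theta" using t N_pos by (simp add: sin_theta)
  have quarter: "real n_good / real N \<le> 1/4" by (rule good_fraction_le_quarter[OF few(1)])
  then have tN: "n_good < N" using t N_pos by (simp add: field_simps)
  have "c ^ l / 2 \<le> expected_cost success_prob (round_params c \<tau> N)"
    by (rule expected_cost_ge_half_power[OF c t tN l scale(1)])
  then have "3/4 * (c ^ l / 2) \<le> (1 - real n_good / real N) * expected_cost success_prob (round_params c \<tau> N)"
    using quarter c good_fraction_bounds by (intro mult_mono) auto
  moreover have "lower_const c / sin theta < 3/8 * c ^ l"
  proof -
    have "(c - 1) / 8 / (c * sin theta) < c ^ l" using scale(2) c s by (simp add: field_simps)
    then show ?thesis unfolding lower_const_def using c s by (simp add: field_simps)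
  qed
  ultimately show ?thesis by linarith
qed

lemma expected_cost_lower:
  assumes c: "1 < c" "c < 2" and t: "1 \<le> n_good" and \<tau>: "0 < \<tau>" "\<tau> < 1"
  shows "lower_const c * sqrt (real N / real n_good)
    \<le> 1 + (1 - real n_good / real N) * expected_cost success_prob (round_params c \<tau> N)"
proof -
  define s where "s = sin theta"
  have s: "0 < s" unfolding s_def sin_theta using t N_pos by simp
  have s_inv: "sqrt (real N / real n_good) = 1 / s" unfolding s_def sin_theta by (simp add: real_sqrt_divide)
  have "0 \<le> (1 - real n_good / real N) * expected_cost success_prob (round_params c \<tau> N)"
    using good_fraction_bounds expected_cost_nonneg[OF success_prob_bounds] by simp
  moreover have "lower_const c / s \<le> 1" if "1/2 < s \<or> (c - 1) / 8 < c * s"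
  proof -
    have "c < 2 * (c * s) \<or> c - 1 < 8 * (c * s)"
    proof (cases "1/2 < s")
      case True
      then have "c * (1/2) < c * s" using c by (intro mult_strict_left_mono) auto
      then show ?thesis by simp
    qed (use that in simp)
    moreover have "3 * (c - 1) \<le> 64 * y" if "c < 2 * y \<or> c - 1 < 8 * y" for y
      using that c by auto
    ultimately have "3 * (c - 1) \<le> 64 * (c * s)" by blast
    then show ?thesis unfolding lower_const_def using c s by (simp add: field_simps)
  qed
  ultimately show ?thesis
    unfolding s_inv using expected_cost_lower_few_good[OF c t \<tau>] unfolding s_def[symmetric]
    by (cases "1/2 < s \<or> (c - 1) / 8 < c * s") (auto simp: not_less)
qed

lemma failure_prob_small:
  assumes c: "1 < c" "c < 2" and t: "1 \<le> n_good" and \<epsilon>: "0 < \<epsilon>"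
  obtains \<tau>0 where "0 < \<tau>0"
    "\<And>\<tau>. 0 < \<tau> \<Longrightarrow> \<tau> \<le> \<tau>0 \<Longrightarrow> (1 - real n_good / real N) * failure_prob success_prob (round_params c \<tau> N) \<le> \<epsilon>"
proof (cases "n_good = N")
  case True
  then show ?thesis using that[of 1] N_pos \<epsilon> by simp
next
  case False
  then have tN: "n_good < N" using n_good_le by simp
  define p where "p = (c + 2) / (4 * c)"
  have p: "0 \<le> p" "p < 1" unfolding p_def using c by (auto simp: field_simps)
  obtain L where fail: "\<And>i. L \<le> i \<Longrightarrow> 1 - avg_success success_prob (round_size c i) \<le> p"
    using late_rounds_fail_rarely[OF c t tN] unfolding p_def by blast
  obtain n0 where n0: "p ^ n0 < \<epsilon>" using real_arch_pow_inv[OF \<epsilon> p(2)] by blast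
  show ?thesis
  proof (rule that)
    show "0 < (3/4 :: real) ^ (L + n0 + 1)" by simp
    fix \<tau> :: real assume \<tau>: "0 < \<tau>" "\<tau> \<le> (3/4) ^ (L + n0 + 1)"
    define R where "R = num_rounds c \<tau> N"
    have "ln \<tau> \<le> ln ((3/4) ^ (L + n0 + 1))" using \<tau> by simp
    also have "\<dots> = real (L + n0 + 1) * ln (3/4)" by (rule ln_realpow)
    finally have "real (L + n0 + 1) \<le> ln \<tau> / ln (3/4)" by (simp add: le_divide_eq)
    also have "\<dots> \<le> real R" unfolding R_def by (rule num_rounds_ge[OF c(1)])
    finally have RL: "L + n0 + 1 \<le> R" by linarith
    have "failure_prob success_prob (round_params c \<tau> N) \<le> p ^ (R + 1 - max 1 L)"
      unfolding round_params_eq R_def[symmetric] by (rule failure_prob_le_power[OF success_prob_bounds p(1) fail])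
    also have "\<dots> \<le> p ^ n0" using p RL by (intro power_decreasing) auto
    finally have "failure_prob success_prob (round_params c \<tau> N) \<le> \<epsilon>" using n0 by linarith
    moreover have "(1 - real n_good / real N) * failure_prob success_prob (round_params c \<tau> N)
        \<le> failure_prob success_prob (round_params c \<tau> N)"
      using good_fraction_bounds failure_prob_nonneg[OF success_prob_bounds] by (intro mult_left_le_one_le) auto
    ultimately show "(1 - real n_good / real N) * failure_prob success_prob (round_params c \<tau> N) \<le> \<epsilon>"
      by linarith
  qed
qed

lemma expected_calls_le:
  assumes "1 < c" "c < 2" "1 \<le> n_good"
  shows "measure_pmf.expectation (quantum_search_step c \<tau> d q f xk xs N A Ainv) (\<lambda>(r, k). real k)
    \<le> upper_const c * sqrt (real N / real n_good)"
  unfolding expected_calls_quantum_search_step[OF less_imp_le[OF assms(1)]] using expected_cost_upper[OF assms] .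

lemma expected_calls_ge:
  assumes "1 < c" "c < 2" "1 \<le> n_good" "0 < \<tau>" "\<tau> < 1"
  shows "lower_const c * sqrt (real N / real n_good)
    \<le> measure_pmf.expectation (quantum_search_step c \<tau> d q f xk xs N A Ainv) (\<lambda>(r, k). real k)"
  unfolding expected_calls_quantum_search_step[OF less_imp_le[OF assms(1)]] using expected_cost_lower[OF assms] .

lemma failure_vanishes:
  assumes "1 < c" "c < 2" "1 \<le> n_good" "0 < \<epsilon>"
  shows "\<exists>\<tau>0>0. \<forall>\<tau>. 0 < \<tau> \<and> \<tau> \<le> \<tau>0 \<longrightarrow>
    measure_pmf.prob (quantum_search_step c \<tau> d q f xk xs N A Ainv) {p. fst p = None} \<le> \<epsilon>"
proof -
  obtain \<tau>0 where "0 < \<tau>0" "\<And>\<tau>. 0 < \<tau> \<Longrightarrow> \<tau> \<le> \<tau>0 \<Longrightarrow>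
      (1 - real n_good / real N) * failure_prob success_prob (round_params c \<tau> N) \<le> \<epsilon>"
    using failure_prob_small[OF assms] by blast
  then show ?thesis unfolding failure_prob_quantum_search_step[OF less_imp_le[OF assms(1)]] by auto
qed

end

theorem theorem2:
  fixes c :: real
  assumes "1 < c" and "c < 2"
  shows
   "(\<exists>C1>0. \<exists>C2>0. \<forall>(f :: real^'n \<Rightarrow> real) xk \<Delta> (D :: real^'p^'n) G zs xs N d q A Ainv \<tau>.
       qss_hyps f xk \<Delta> D G zs xs N d q A Ainv \<and> 0 < \<tau> \<longrightarrow>
       (let P = quantum_search_step c \<tau> d q f xk xs N A Ainv;
            t = improved_count f xk xs N;
            E = measure_pmf.expectation P (\<lambda>(r, k). real k)
        in (\<forall>r k x. (r, k) \<in> set_pmf P \<longrightarrow> r = Some x \<longrightarrow> x \<in> xs ` {..<N} \<and> f x < f xk) \<and>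
           (1 \<le> t \<longrightarrow> E \<le> C2 * sqrt (real N / real t)) \<and>
           (1 \<le> t \<and> \<tau> < 1 \<longrightarrow> C1 * sqrt (real N / real t) \<le> E)))
    \<and> (\<forall>(f :: real^'n \<Rightarrow> real) xk \<Delta> (D :: real^'p^'n) G zs xs N d q A Ainv.
         qss_hyps f xk \<Delta> D G zs xs N d q A Ainv \<and> 1 \<le> improved_count f xk xs N \<longrightarrow>
         (\<forall>\<epsilon>>0. \<exists>\<tau>0>0. \<forall>\<tau>. 0 < \<tau> \<and> \<tau> \<le> \<tau>0 \<longrightarrow>
            measure_pmf.prob (quantum_search_step c \<tau> d q f xk xs N A Ainv) {p. fst p = None} \<le> \<epsilon>))"
proof -
  note found = qss_instance.quantum_search_step_found_improved[OF qss_instance.intro]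
    and upper = qss_instance.expected_calls_le[OF qss_instance.intro assms]
    and lower = qss_instance.expected_calls_ge[OF qss_instance.intro assms]
    and vanish = qss_instance.failure_vanishes[OF qss_instance.intro assms]
  have C: "0 < lower_const c" "0 < upper_const c"
    unfolding lower_const_def upper_const_def using assms by (simp_all add: add_pos_pos)
  show ?thesis
    unfolding Let_def
    by (rule conjI, rule exI[of _ "lower_const c"], rule conjI[OF C(1)],
        rule exI[of _ "upper_const c"], rule conjI[OF C(2)])
      (auto intro: upper lower vanish dest: found)
qed

end
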